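(* Let $k\ge 3$ and let $H=(V,E)$ be a hypergraph all of whose hyperedges have size between $2$ and $k$. If the real number $\beta$ satisfies $$-\frac{1}{2^{k-1}-1}\le\beta\le\frac{1}{2^{k-1}\cos^{k-1}\!\left(\frac{\pi}{k-1}\right)+1},$$ then every complex zero of the polynomial $\lambda\mapsto Z_H^{\beta}(\lambda)$ lies on the unit circle $\{|\lambda|=1\}$. Conversely, if $\beta\neq 1$ is a real number not in this range, then there exists a hypergraph $H$ with all hyperedges of size at most $k$ such that some zero of $Z_H^{\beta}(\lambda)$ does not lie on the unit circle.
   Context: For a hypergraph $H=(V,E)$ (hyperedges are subsets of $V$), edge activity $\beta\in\mathbb R$ and $\lambda\in\mathbb C$, the Ising partition function is $Z_H^{\beta}(\lambda)=\sum_{S\subseteq V}\beta^{|E(S,\overline S)|}\lambda^{|S|}$, where $E(S,\overline S)$ is the set of hyperedges containing at least one vertex of $S$ and at least one vertex of $V\setminus S$. *)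

theory Defs
  imports Complex_Main
begin

definition cut_edges :: "'a set \<Rightarrow> 'a set set \<Rightarrow> 'a set \<Rightarrow> 'a set set" where
  "cut_edges V E S = {e \<in> E. e \<inter> S \<noteq> {} \<and> e \<inter> (V - S) \<noteq> {}}"

definition ising_Z :: "'a set \<Rightarrow> 'a set set \<Rightarrow> real \<Rightarrow> complex \<Rightarrow> complex" where
  "ising_Z V E b z = (\<Sum>S\<in>Pow V. (complex_of_real b) ^ card (cut_edges V E S) * z ^ card S)"

definition hypergraph :: "'a set \<Rightarrow> 'a set set \<Rightarrow> bool" where
  "hypergraph V E \<longleftrightarrow> finite V \<and> (\<forall>e\<in>E. e \<subseteq> V)"

end

theory Submission
  imports
    Defs
    "HOL-Complex_Analysis.Conformal_Mappings"
    "HOL-Computational_Algebra.Fundamental_Theorem_Algebra"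
begin

text \<open>
  Give every vertex its own variable. The multivariate partition function then arises from the
  product of the single-edge polynomials \<open>Q\<^sub>e(w) = (1 - \<beta>)(1 + \<Prod> w) + \<beta> \<Prod> (1 + w)\<close> by
  repeatedly identifying two variables, and Asano's lemma says that such a contraction preserves
  zero-freeness on the open unit polydisc. So it suffices that each \<open>Q\<^sub>e\<close> has no zeros there.
  Write \<open>Q\<^sub>e = \<alpha> + \<alpha>' w\<^sub>0\<close> with \<open>\<alpha>, \<alpha>'\<close> depending on the remaining \<open>|e| - 1 \<le> k - 1\<close> variables.
  On the torus \<open>|\<alpha>'| = |\<alpha>|\<close>, so by the maximum modulus principle \<open>|\<alpha>'| \<le> |\<alpha>|\<close> on the closed
  polydisc as long as \<open>\<alpha>\<close> has no zeros there. A zero of \<open>\<alpha>\<close> makes \<open>\<Prod> (1 + w\<^sub>i)\<close> equal to the real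
  number \<open>(\<beta> - 1) / \<beta>\<close>. Each factor lies in the disc \<open>|\<zeta> - 1| \<le> 1\<close>, where \<open>|\<zeta>| \<le> 2 cos (arg \<zeta>)\<close>, so
  the product has modulus at most \<open>2^(k - 1)\<close>, and if it is negative its angles add up to at least
  \<open>pi\<close> and concavity of \<open>ln \<circ> cos\<close> bounds it by \<open>(2 cos (pi / (k - 1)))^(k - 1)\<close>: these are exactly the
  two ends of the critical range. The symmetry \<open>Z(\<lambda>) = \<lambda>\<^sup>n Z(1/\<lambda>)\<close> moves zero-freeness from the
  disc to its exterior.

  Conversely a single hyperedge suffices. Below the range, and for \<open>\<beta> > 1\<close> with an edge of size
  2, the single-edge polynomial has a real root in \<open>(-1, 1)\<close>. Between the upper end and 1, the
  substitution \<open>\<lambda> = s\<^sup>2\<close>, \<open>y = s + 1/s\<close> turns it into \<open>s\<^sup>k P(y)\<close> with \<open>P = (1 - \<beta>) D\<^sub>k + \<beta> y\<^sup>k\<close>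
  (\<open>D\<^sub>k\<close> the Dickson polynomial), and \<open>P\<close> violates Laguerre's inequality
  \<open>(k - 1) P'\<^sup>2 - k P P'' \<ge> 0\<close> at \<open>y = 2 cos (pi / (k - 1))\<close>. Hence \<open>P\<close> has a non-real root \<open>y\<close>,
  for which \<open>|s| \<noteq> 1\<close>.
\<close>

section \<open>Asano contraction\<close>

lemma affine_norm_le_of_nonzero_in_disc:
  fixes a b :: complex
  assumes "\<And>x. cmod x < 1 \<Longrightarrow> a + b * x \<noteq> 0"
  shows "cmod b \<le> cmod a"
proof (rule ccontr)
  assume "\<not> cmod b \<le> cmod a"
  hence lt: "cmod a < cmod b" by simp
  hence "b \<noteq> 0" by auto
  have "cmod (- a / b) < 1" using lt \<open>b \<noteq> 0\<close> by (simp add: norm_divide divide_less_eq)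
  moreover have "a + b * (- a / b) = 0" using \<open>b \<noteq> 0\<close> by simp
  ultimately show False using assms by blast
qed

lemma cmod_parallelogram: "(cmod (x + y))\<^sup>2 + (cmod (x - y))\<^sup>2 = 2 * (cmod x)\<^sup>2 + 2 * (cmod y)\<^sup>2"
  unfolding cmod_power2 by (simp add: power2_eq_square algebra_simps)

lemma asano_contraction:
  fixes a b c d :: complex
  assumes nz: "\<And>s t. cmod s < 1 \<Longrightarrow> cmod t < 1 \<Longrightarrow> a + b * s + c * t + d * s * t \<noteq> 0"
    and u: "cmod u < 1"
  shows "a + d * u \<noteq> 0"
proof -
  have le_c: "cmod (c + d * s) \<le> cmod (a + b * s)" if "cmod s < 1" for s
  proof (rule affine_norm_le_of_nonzero_in_disc)
    fix t :: complex assume "cmod t < 1"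
    thus "a + b * s + (c + d * s) * t \<noteq> 0" using nz[OF that \<open>cmod t < 1\<close>] by (simp add: algebra_simps)
  qed
  have le_b: "cmod (b + d * t) \<le> cmod (a + c * t)" if "cmod t < 1" for t
  proof (rule affine_norm_le_of_nonzero_in_disc)
    fix s :: complex assume "cmod s < 1"
    thus "a + c * t + (b + d * t) * s \<noteq> 0" using nz[OF \<open>cmod s < 1\<close> that] by (simp add: algebra_simps)
  qed
  \<comment> \<open>Averaging these four bounds over \<open>\<pm>r\<close> with the parallelogram law cancels the \<open>b\<close> and \<open>c\<close> terms.\<close>
  have "r * cmod d \<le> cmod a" if r: "0 < r" "r < 1" for r :: real
  proof -
    let ?r = "complex_of_real r"
    have "((cmod (c + d * ?r))\<^sup>2 + (cmod (c - d * ?r))\<^sup>2) + ((cmod (b + d * ?r))\<^sup>2 + (cmod (b - d * ?r))\<^sup>2)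
        \<le> ((cmod (a + b * ?r))\<^sup>2 + (cmod (a - b * ?r))\<^sup>2) + ((cmod (a + c * ?r))\<^sup>2 + (cmod (a - c * ?r))\<^sup>2)"
      using le_c[of ?r] le_c[of "- ?r"] le_b[of ?r] le_b[of "- ?r"] r
      by (intro add_mono power_mono) auto
    hence "2 * (r * cmod d)\<^sup>2 + (cmod b)\<^sup>2 + (cmod c)\<^sup>2 \<le> 2 * (cmod a)\<^sup>2 + (r * cmod b)\<^sup>2 + (r * cmod c)\<^sup>2"
      unfolding cmod_parallelogram using r by (simp add: norm_mult power_mult_distrib mult_ac)
    moreover have "(r * cmod b)\<^sup>2 \<le> (cmod b)\<^sup>2" "(r * cmod c)\<^sup>2 \<le> (cmod c)\<^sup>2"
      using r by (auto simp: power_mult_distrib intro!: mult_left_le_one_le power_le_one)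
    ultimately have "(r * cmod d)\<^sup>2 \<le> (cmod a)\<^sup>2" by linarith
    thus ?thesis by (rule power2_le_imp_le) simp
  qed
  hence da: "cmod d \<le> cmod a" by (rule field_le_mult_one_interval)
  have "a \<noteq> 0" using nz[of 0 0] by simp
  show ?thesis
  proof
    assume "a + d * u = 0"
    hence "a = - (d * u)" by (simp add: eq_neg_iff_add_eq_0)
    hence "cmod a = cmod d * cmod u" by (simp add: norm_mult)
    also have "\<dots> \<le> cmod a * cmod u" using da by (simp add: mult_right_mono)
    also have "\<dots> < cmod a" using u \<open>a \<noteq> 0\<close> by simp
    finally show False by simp
  qed
qed

section \<open>The multivariate partition function\<close>

definition ising_multi :: "'a set \<Rightarrow> 'a set set \<Rightarrow> complex \<Rightarrow> ('a \<Rightarrow> complex) \<Rightarrow> complex" where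
  "ising_multi V E b z = (\<Sum>S\<in>Pow V. b ^ card (cut_edges V E S) * (\<Prod>v\<in>S. z v))"

definition cut_weight :: "'a set \<Rightarrow> complex \<Rightarrow> 'a set \<Rightarrow> complex" where
  "cut_weight e b W = (if W \<noteq> {} \<and> W \<noteq> e then b else 1)"

definition edge_poly :: "'a set \<Rightarrow> complex \<Rightarrow> ('a \<Rightarrow> complex) \<Rightarrow> complex" where
  "edge_poly e b w = (\<Sum>W\<in>Pow e. cut_weight e b W * (\<Prod>v\<in>W. w v))"

definition zero_free_polydisc :: "'a set \<Rightarrow> (('a \<Rightarrow> complex) \<Rightarrow> complex) \<Rightarrow> bool" where
  "zero_free_polydisc A f \<longleftrightarrow> (\<forall>z. (\<forall>x\<in>A. cmod (z x) < 1) \<longrightarrow> f z \<noteq> 0)"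

lemma ising_Z_eq_ising_multi: "ising_Z V E b z = ising_multi V E (of_real b) (\<lambda>_. z)"
  unfolding ising_Z_def ising_multi_def by simp

lemma sum_Pow_split:
  assumes "finite X" "v \<in> X"
  shows "(\<Sum>S\<in>Pow X. f S) = (\<Sum>S\<in>Pow (X - {v}). f S) + (\<Sum>S\<in>Pow (X - {v}). f (insert v S))"
proof -
  have X: "X = insert v (X - {v})" using assms by auto
  have "(\<Sum>S\<in>Pow X. f S) = (\<Sum>S\<in>Pow (X - {v}) \<union> insert v ` Pow (X - {v}). f S)"
    by (subst X, subst Pow_insert) simp
  also have "\<dots> = (\<Sum>S\<in>Pow (X - {v}). f S) + (\<Sum>S\<in>insert v ` Pow (X - {v}). f S)"
    by (rule sum.union_disjoint) (use assms in auto)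
  also have "(\<Sum>S\<in>insert v ` Pow (X - {v}). f S) = (\<Sum>S\<in>Pow (X - {v}). f (insert v S))"
    by (rule sum.reindex_cong[where l="insert v"]) (auto simp: inj_on_def)
  finally show ?thesis .
qed

lemma prod_fun_upd_notin: "v \<notin> R \<Longrightarrow> (\<Prod>x\<in>R. (z(v := s)) x) = (\<Prod>x\<in>R. z x)"
  by (rule prod.cong) auto

lemma prod_fun_upd_insert:
  assumes "finite R" "v \<notin> R"
  shows "(\<Prod>x\<in>insert v R. (z(v := s)) x) = s * (\<Prod>x\<in>R. z x)"
  using assms prod_fun_upd_notin[of v R z s] by simp

lemma power_card_cut_edges_insert:
  assumes "finite E" "e \<notin> E" "e \<subseteq> V"
  shows "b ^ card (cut_edges V (insert e E) S) = b ^ card (cut_edges V E S) * cut_weight e b (e \<inter> S)"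
proof -
  have fin: "finite (cut_edges V E S)" and nin: "e \<notin> cut_edges V E S"
    using assms(1,2) by (simp_all add: cut_edges_def)
  have cut_iff: "(e \<inter> S \<noteq> {} \<and> e \<inter> (V - S) \<noteq> {}) \<longleftrightarrow> (e \<inter> S \<noteq> {} \<and> e \<inter> S \<noteq> e)"
    using assms(3) by blast
  show ?thesis
  proof (cases "e \<inter> S \<noteq> {} \<and> e \<inter> S \<noteq> e")
    case True
    hence "cut_edges V (insert e E) S = insert e (cut_edges V E S)"
      using cut_iff by (auto simp: cut_edges_def)
    thus ?thesis using True fin nin by (simp add: cut_weight_def)
  next
    case False
    hence "cut_edges V (insert e E) S = cut_edges V E S"
      using cut_iff by (auto simp: cut_edges_def)
    thus ?thesis using False by (auto simp: cut_weight_def)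
  qed
qed

context
  fixes V :: "'a set" and E :: "'a set set" and b :: complex and e :: "'a set"
begin

text \<open>The product of \<open>ising_multi V E b z\<close> with the edge polynomial of \<open>e\<close> in separate variables
  \<open>w\<close>, in which the edge variables at the vertices in \<open>T\<close> have been identified with the vertex
  variables \<open>z\<close>.\<close>

definition contracted :: "'a set \<Rightarrow> ('a \<Rightarrow> complex) \<Rightarrow> ('a \<Rightarrow> complex) \<Rightarrow> complex" where
  "contracted T z w = (\<Sum>R\<in>Pow V. \<Sum>W\<in>Pow (e - T).
     b ^ card (cut_edges V E R) * cut_weight e b ((R \<inter> T) \<union> W) * (\<Prod>x\<in>R. z x) * (\<Prod>x\<in>W. w x))"

definition contracted_zero_free :: "'a set \<Rightarrow> bool" where
  "contracted_zero_free T \<longleftrightarrow>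
     (\<forall>w. (\<forall>x\<in>e. cmod (w x) < 1) \<longrightarrow> zero_free_polydisc V (\<lambda>z. contracted T z w))"

lemma contracted_empty: "contracted {} z w = ising_multi V E b z * edge_poly e b w"
  unfolding contracted_def ising_multi_def edge_poly_def sum_product by (simp add: algebra_simps)

lemma contracted_all:
  assumes "finite E" "e \<notin> E" "e \<subseteq> V"
  shows "contracted e z w = ising_multi V (insert e E) b z"
  unfolding contracted_def ising_multi_def
  using power_card_cut_edges_insert[OF assms, of b] by (simp add: Int_commute)

text \<open>Identifying the two variables at \<open>v\<close> is one Asano contraction.\<close>

lemma contracted_bilinear_split:
  assumes fV: "finite V" and eV: "e \<subseteq> V" and v: "v \<in> e" "v \<notin> T"
  obtains p q r s where "\<And>x y. contracted T (z(v := x)) (w(v := y)) = p + q * x + r * y + s * x * y"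
    and "contracted (insert v T) z w = p + s * z v"
proof -
  have fe: "finite e" using fV eV finite_subset by blast
  have vV: "v \<in> V" using v eV by auto
  define c where "c R = b ^ card (cut_edges V E R)" for R
  define V' where "V' = V - {v}"
  define e' where "e' = e - T - {v}"
  have e'_eq: "e - insert v T = e'" "(e - T) - {v} = e'" by (auto simp: e'_def)
  have fin: "finite R" "v \<notin> R" if "R \<subseteq> V' \<or> R \<subseteq> e'" for R
    using that fV fe finite_subset by (auto simp: V'_def e'_def)
  define p where "p = (\<Sum>R\<in>Pow V'. \<Sum>W\<in>Pow e'. c R * cut_weight e b ((R \<inter> T) \<union> W) * (\<Prod>x\<in>R. z x) * (\<Prod>x\<in>W. w x))"
  define q where "q = (\<Sum>R\<in>Pow V'. \<Sum>W\<in>Pow e'. c (insert v R) * cut_weight e b ((R \<inter> T) \<union> W) * (\<Prod>x\<in>R. z x) * (\<Prod>x\<in>W. w x))"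
  define r where "r = (\<Sum>R\<in>Pow V'. \<Sum>W\<in>Pow e'. c R * cut_weight e b (insert v ((R \<inter> T) \<union> W)) * (\<Prod>x\<in>R. z x) * (\<Prod>x\<in>W. w x))"
  define s where "s = (\<Sum>R\<in>Pow V'. \<Sum>W\<in>Pow e'. c (insert v R) * cut_weight e b (insert v ((R \<inter> T) \<union> W)) * (\<Prod>x\<in>R. z x) * (\<Prod>x\<in>W. w x))"
  have "contracted T (z(v := x)) (w(v := y)) = p + q * x + r * y + s * x * y" for x y
  proof -
    define f where "f R W = c R * cut_weight e b ((R \<inter> T) \<union> W) * (\<Prod>u\<in>R. (z(v := x)) u) * (\<Prod>u\<in>W. (w(v := y)) u)" for R W
    have "contracted T (z(v := x)) (w(v := y)) = (\<Sum>R\<in>Pow V. \<Sum>W\<in>Pow (e - T). f R W)"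
      by (simp add: contracted_def f_def c_def)
    also have "\<dots> = (\<Sum>R\<in>Pow V'. \<Sum>W\<in>Pow (e - T). f R W) + (\<Sum>R\<in>Pow V'. \<Sum>W\<in>Pow (e - T). f (insert v R) W)"
      unfolding V'_def by (rule sum_Pow_split[OF fV vV])
    also have "\<dots> = (\<Sum>R\<in>Pow V'. (\<Sum>W\<in>Pow e'. f R W) + (\<Sum>W\<in>Pow e'. f R (insert v W)))
        + (\<Sum>R\<in>Pow V'. (\<Sum>W\<in>Pow e'. f (insert v R) W) + (\<Sum>W\<in>Pow e'. f (insert v R) (insert v W)))"
      using fe v by (simp add: sum_Pow_split[of "e - T" v] e'_eq)
    also have "\<dots> = p + r * y + (q * x + s * x * y)"
      unfolding sum.distrib p_def q_def r_def s_def f_def sum_distrib_right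
      by (intro arg_cong2[where f="(+)"] sum.cong refl)
        (simp_all add: fin prod_fun_upd_notin prod_fun_upd_insert v(2) fun_upd_same del: fun_upd_apply)
    finally show ?thesis by (simp add: algebra_simps)
  qed
  moreover have "contracted (insert v T) z w = p + s * z v"
  proof -
    define f where "f R W = c R * cut_weight e b ((R \<inter> insert v T) \<union> W) * (\<Prod>x\<in>R. z x) * (\<Prod>x\<in>W. w x)" for R W
    have "contracted (insert v T) z w = (\<Sum>R\<in>Pow V. \<Sum>W\<in>Pow e'. f R W)"
      by (simp add: contracted_def f_def c_def e'_eq)
    also have "\<dots> = (\<Sum>R\<in>Pow V'. \<Sum>W\<in>Pow e'. f R W) + (\<Sum>R\<in>Pow V'. \<Sum>W\<in>Pow e'. f (insert v R) W)"
      unfolding V'_def by (rule sum_Pow_split[OF fV vV])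
    also have "\<dots> = p + s * z v"
      unfolding p_def s_def f_def sum_distrib_right
      by (intro arg_cong2[where f="(+)"] sum.cong refl)
        (auto simp: fin v(2) algebra_simps intro!: arg_cong[where f="cut_weight e b"])
    finally show ?thesis .
  qed
  ultimately show thesis by (rule that)
qed

lemma contracted_zero_free_insert:
  assumes "finite V" "e \<subseteq> V" "v \<in> e" "v \<notin> T" and zf: "contracted_zero_free T"
  shows "contracted_zero_free (insert v T)"
  unfolding contracted_zero_free_def zero_free_polydisc_def
proof (intro allI impI)
  fix z w :: "'a \<Rightarrow> complex"
  assume z: "\<forall>x\<in>V. cmod (z x) < 1" and w: "\<forall>x\<in>e. cmod (w x) < 1"
  obtain p q r s where split: "\<And>x y. contracted T (z(v := x)) (w(v := y)) = p + q * x + r * y + s * x * y"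
    and contr: "contracted (insert v T) z w = p + s * z v"
    using contracted_bilinear_split[OF assms(1-4)] by metis
  have "p + s * z v \<noteq> 0"
  proof (rule asano_contraction)
    fix x y :: complex assume "cmod x < 1" "cmod y < 1"
    hence "contracted T (z(v := x)) (w(v := y)) \<noteq> 0"
      using zf z w unfolding contracted_zero_free_def zero_free_polydisc_def by auto
    thus "p + q * x + r * y + s * x * y \<noteq> 0" using split by simp
  next
    show "cmod (z v) < 1" using z assms(2,3) by auto
  qed
  thus "contracted (insert v T) z w \<noteq> 0" using contr by simp
qed

lemma contracted_zero_free_all:
  assumes fV: "finite V" and eV: "e \<subseteq> V"
    and zf_E: "zero_free_polydisc V (ising_multi V E b)" and zf_e: "zero_free_polydisc e (edge_poly e b)"
  shows "contracted_zero_free e"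
proof -
  have "contracted_zero_free T" if "finite T" "T \<subseteq> e" for T
    using that
  proof (induction T rule: finite_induct)
    case empty
    show ?case
      using zf_E zf_e unfolding contracted_zero_free_def zero_free_polydisc_def contracted_empty by auto
  next
    case (insert v T)
    thus ?case using contracted_zero_free_insert[OF fV eV] by auto
  qed
  thus ?thesis using fV eV finite_subset by blast
qed

end

theorem zero_free_ising_multi:
  assumes fV: "finite V" and eV: "\<forall>e\<in>E. e \<subseteq> V"
    and zf: "\<forall>e\<in>E. zero_free_polydisc e (edge_poly e b)"
  shows "zero_free_polydisc V (ising_multi V E b)"
proof -
  have "finite E" using eV fV by (meson Pow_iff finite_Pow_iff finite_subset subsetI)
  thus ?thesis using eV zf
  proof (induction E rule: finite_induct)
    case empty
    have "ising_multi V {} b z = (\<Prod>x\<in>V. z x + 1)" for z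
      unfolding ising_multi_def prod_add[OF fV] by (simp add: cut_edges_def)
    moreover have "u + 1 \<noteq> 0" if "cmod u < 1" for u :: complex
      using that by (metis add_eq_0_iff norm_minus_cancel norm_one order_less_irrefl)
    ultimately show ?case using fV by (auto simp: zero_free_polydisc_def)
  next
    case (insert e E)
    have "contracted_zero_free V E b e e"
      using insert fV by (intro contracted_zero_free_all) auto
    thus ?case
      using contracted_all[OF insert(1,2), of V b] insert.prems
      unfolding contracted_zero_free_def zero_free_polydisc_def by (metis insertI1 subsetD)
  qed
qed

section \<open>Self-reciprocity\<close>

lemma cut_edges_complement:
  assumes "\<forall>e\<in>E. e \<subseteq> V"
  shows "cut_edges V E (V - S) = cut_edges V E S"
  unfolding cut_edges_def using assms by auto

lemma ising_Z_reciprocal: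
  assumes hg: "hypergraph V E" and z: "z \<noteq> 0"
  shows "ising_Z V E b z = z ^ card V * ising_Z V E b (1 / z)"
proof -
  have fV: "finite V" and eV: "\<forall>e\<in>E. e \<subseteq> V" using hg by (auto simp: hypergraph_def)
  let ?w = "\<lambda>S. (complex_of_real b) ^ card (cut_edges V E S)"
  have "ising_Z V E b (1 / z) = (\<Sum>S\<in>Pow V. ?w (V - S) * (1 / z) ^ card (V - S))"
    unfolding ising_Z_def
    by (rule sum.reindex_bij_witness[where i="\<lambda>S. V - S" and j="\<lambda>S. V - S"]) (auto simp: Diff_Diff_Int Int_absorb1)
  also have "\<dots> = (\<Sum>S\<in>Pow V. ?w S * (1 / z) ^ (card V - card S))"
    using fV by (intro sum.cong refl) (simp add: cut_edges_complement[OF eV] card_Diff_subset finite_subset)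
  finally have "z ^ card V * ising_Z V E b (1 / z) = (\<Sum>S\<in>Pow V. ?w S * (z ^ card V * (1 / z) ^ (card V - card S)))"
    by (simp add: sum_distrib_left algebra_simps)
  also have "\<dots> = ising_Z V E b z"
    unfolding ising_Z_def
  proof (rule sum.cong[OF refl])
    fix S assume "S \<in> Pow V"
    hence "card S \<le> card V" using fV by (simp add: card_mono)
    hence "z ^ card V = z ^ card S * z ^ (card V - card S)" by (simp add: power_add[symmetric])
    hence "z ^ card V * (1 / z) ^ (card V - card S) = z ^ card S" using z by (simp add: power_one_over)
    thus "?w S * (z ^ card V * (1 / z) ^ (card V - card S)) = ?w S * z ^ card S" by simp
  qed
  finally show ?thesis by simp
qed

lemma ising_Z_zeros_on_unit_circle_of_zero_free:
  assumes hg: "hypergraph V E" and zf: "zero_free_polydisc V (ising_multi V E (of_real b))"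
    and Z: "ising_Z V E b z = 0"
  shows "cmod z = 1"
proof -
  have disc: "ising_Z V E b u \<noteq> 0" if "cmod u < 1" for u
    using zf that unfolding zero_free_polydisc_def ising_Z_eq_ising_multi by auto
  show ?thesis
  proof (cases "cmod z < 1")
    case False
    show ?thesis
    proof (rule ccontr)
      assume "cmod z \<noteq> 1"
      hence gt: "cmod z > 1" using False by simp
      hence "z \<noteq> 0" by auto
      have "cmod (1 / z) < 1" using gt by (simp add: norm_divide divide_less_eq)
      hence "ising_Z V E b (1 / z) \<noteq> 0" by (rule disc)
      thus False using Z \<open>z \<noteq> 0\<close> ising_Z_reciprocal[OF hg \<open>z \<noteq> 0\<close>, of b] by simp
    qed
  qed (use disc Z in auto)
qed


section \<open>The polynomial of a single hyperedge\<close>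

lemma edge_poly_eq:
  assumes fe: "finite e" and ne: "e \<noteq> {}"
  shows "edge_poly e b w = (1 - b) * (1 + (\<Prod>x\<in>e. w x)) + b * (\<Prod>x\<in>e. 1 + w x)"
proof -
  have expand: "(\<Prod>x\<in>e. 1 + w x) = (\<Sum>W\<in>Pow e. \<Prod>x\<in>W. w x)"
    using prod_add[OF fe, of w "\<lambda>_. 1"] by (simp add: add.commute)
  have weight: "cut_weight e b W = b + (1 - b) * (if W = {} then 1 else 0) + (1 - b) * (if W = e then 1 else 0)" for W
    using ne by (auto simp: cut_weight_def algebra_simps)
  have "edge_poly e b w = (\<Sum>W\<in>Pow e. b * (\<Prod>x\<in>W. w x)
      + (1 - b) * (if W = {} then (\<Prod>x\<in>W. w x) else 0) + (1 - b) * (if W = e then (\<Prod>x\<in>W. w x) else 0))"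
    unfolding edge_poly_def weight by (intro sum.cong refl) (simp add: algebra_simps)
  also have "\<dots> = b * (\<Sum>W\<in>Pow e. \<Prod>x\<in>W. w x)
      + (1 - b) * (\<Sum>W\<in>Pow e. if W = {} then (\<Prod>x\<in>W. w x) else 0)
      + (1 - b) * (\<Sum>W\<in>Pow e. if W = e then (\<Prod>x\<in>W. w x) else 0)"
    by (simp add: sum.distrib sum_distrib_left)
  also have "\<dots> = b * (\<Prod>x\<in>e. 1 + w x) + (1 - b) + (1 - b) * (\<Prod>x\<in>e. w x)"
    using fe by (simp add: sum.delta expand)
  finally show ?thesis by (simp add: algebra_simps)
qed

text \<open>Singling out one vertex \<open>x\<^sub>0\<close> of \<open>e\<close> and writing \<open>F = e - {x\<^sub>0}\<close>, the edge polynomial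
  is affine in \<open>w x\<^sub>0\<close> with the following two coefficients.\<close>

definition edge_coeff0 :: "real \<Rightarrow> 'a set \<Rightarrow> ('a \<Rightarrow> complex) \<Rightarrow> complex" where
  "edge_coeff0 b F v = (1 - of_real b) + of_real b * (\<Prod>i\<in>F. 1 + v i)"

definition edge_coeff1 :: "real \<Rightarrow> 'a set \<Rightarrow> ('a \<Rightarrow> complex) \<Rightarrow> complex" where
  "edge_coeff1 b F v = (1 - of_real b) * (\<Prod>i\<in>F. v i) + of_real b * (\<Prod>i\<in>F. 1 + v i)"

lemma edge_poly_split:
  assumes "finite e" "x\<^sub>0 \<in> e"
  shows "edge_poly e (of_real b) w = edge_coeff0 b (e - {x\<^sub>0}) w + edge_coeff1 b (e - {x\<^sub>0}) w * w x\<^sub>0"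
proof -
  have "(\<Prod>x\<in>e. w x) = w x\<^sub>0 * (\<Prod>x\<in>e - {x\<^sub>0}. w x)" "(\<Prod>x\<in>e. 1 + w x) = (1 + w x\<^sub>0) * (\<Prod>x\<in>e - {x\<^sub>0}. 1 + w x)"
    using assms by (simp_all add: prod.remove)
  moreover have "e \<noteq> {}" using assms(2) by auto
  ultimately show ?thesis using assms(1)
    by (simp add: edge_poly_eq edge_coeff0_def edge_coeff1_def algebra_simps)
qed

text \<open>On the torus \<open>edge_coeff1 = (\<Prod>v) * cnj edge_coeff0\<close>, as \<open>1 + cnj v = (1 + v) / v\<close> there.\<close>

lemma norm_edge_coeff1_eq_on_torus:
  assumes "\<forall>i\<in>F. cmod (v i) = 1"
  shows "cmod (edge_coeff1 b F v) = cmod (edge_coeff0 b F v)"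
proof -
  have cnj: "v i * cnj (v i) = 1" if "i \<in> F" for i
    using assms that complex_norm_square[of "v i"] by simp
  have "(\<Prod>i\<in>F. v i) * (\<Prod>i\<in>F. 1 + cnj (v i)) = (\<Prod>i\<in>F. 1 + v i)"
    unfolding prod.distrib[symmetric] by (rule prod.cong) (auto simp: distrib_left cnj add.commute)
  hence "edge_coeff1 b F v = (\<Prod>i\<in>F. v i) * cnj (edge_coeff0 b F v)"
    by (simp add: edge_coeff0_def edge_coeff1_def algebra_simps)
  moreover have "cmod (\<Prod>i\<in>F. v i) = 1" using assms by (simp add: prod_norm[symmetric])
  ultimately show ?thesis by (simp add: norm_mult)
qed

lemma affine_norm_le_from_circle:
  fixes a\<^sub>0 a\<^sub>1 c\<^sub>0 c\<^sub>1 :: complex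
  assumes nz: "\<And>x. cmod x \<le> 1 \<Longrightarrow> c\<^sub>0 + c\<^sub>1 * x \<noteq> 0"
    and circle: "\<And>x. cmod x = 1 \<Longrightarrow> cmod (a\<^sub>0 + a\<^sub>1 * x) \<le> cmod (c\<^sub>0 + c\<^sub>1 * x)"
    and x: "cmod x \<le> 1"
  shows "cmod (a\<^sub>0 + a\<^sub>1 * x) \<le> cmod (c\<^sub>0 + c\<^sub>1 * x)"
proof -
  define f where "f y = (a\<^sub>0 + a\<^sub>1 * y) / (c\<^sub>0 + c\<^sub>1 * y)" for y
  have "cmod (f x) \<le> 1"
  proof (rule maximum_modulus_frontier[where S="cball 0 1" and f=f and \<xi>=x])
    show "f holomorphic_on interior (cball 0 1)" "continuous_on (closure (cball 0 1)) f"
      unfolding f_def using nz by (auto simp: dist_norm intro!: holomorphic_intros continuous_intros)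
    show "cmod (f y) \<le> 1" if "y \<in> frontier (cball 0 1)" for y
      using that circle nz by (simp add: f_def frontier_cball norm_divide divide_le_eq_1)
  qed (use x in auto)
  thus ?thesis using nz[OF x] by (simp add: f_def norm_divide divide_le_eq_1)
qed

lemma prod_fun_upd_remove:
  assumes "finite F" "j \<in> F"
  shows "(\<Prod>i\<in>F. g ((v(j := x)) i)) = g x * (\<Prod>i\<in>F - {j}. g (v i))"
proof -
  have "(\<Prod>i\<in>F - {j}. g ((v(j := x)) i)) = (\<Prod>i\<in>F - {j}. g (v i))"
    by (rule prod.cong) auto
  thus ?thesis using assms by (simp add: prod.remove[of F j] del: fun_upd_apply) simp
qed

lemma edge_coeffs_affine:
  assumes "finite F" "j \<in> F"
  obtains a\<^sub>0 a\<^sub>1 c\<^sub>0 c\<^sub>1 where "\<And>x. edge_coeff1 b F (v(j := x)) = a\<^sub>0 + a\<^sub>1 * x"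
    and "\<And>x. edge_coeff0 b F (v(j := x)) = c\<^sub>0 + c\<^sub>1 * x"
proof
  let ?b = "complex_of_real b"
  define R where "R = (\<Prod>i\<in>F - {j}. 1 + v i)"
  define P where "P = (\<Prod>i\<in>F - {j}. v i)"
  note prod_upd = prod_fun_upd_remove[OF assms, of _ v]
  show "edge_coeff1 b F (v(j := x)) = ?b * R + ((1 - ?b) * P + ?b * R) * x" for x
    using prod_upd[of "\<lambda>y. 1 + y" x] prod_upd[of "\<lambda>y. y" x]
    by (simp add: edge_coeff1_def R_def P_def algebra_simps del: fun_upd_apply)
  show "edge_coeff0 b F (v(j := x)) = ((1 - ?b) + ?b * R) + (?b * R) * x" for x
    using prod_upd[of "\<lambda>y. 1 + y" x] by (simp add: edge_coeff0_def R_def algebra_simps del: fun_upd_apply)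
qed

text \<open>Maximum modulus in one variable at a time, starting from the torus.\<close>

lemma norm_edge_coeff1_le:
  assumes fF: "finite F"
    and nz: "\<And>v. \<forall>i\<in>F. cmod (v i) \<le> 1 \<Longrightarrow> edge_coeff0 b F v \<noteq> 0"
    and v: "\<forall>i\<in>F. cmod (v i) \<le> 1"
  shows "cmod (edge_coeff1 b F v) \<le> cmod (edge_coeff0 b F v)"
proof -
  have "\<forall>v. (\<forall>i\<in>F. cmod (v i) \<le> 1) \<longrightarrow> (\<forall>i\<in>F - J. cmod (v i) = 1) \<longrightarrow>
          cmod (edge_coeff1 b F v) \<le> cmod (edge_coeff0 b F v)" if "finite J" "J \<subseteq> F" for J
    using that
  proof (induction J rule: finite_induct)
    case empty
    show ?case by (auto simp: norm_edge_coeff1_eq_on_torus)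
  next
    case (insert j J)
    show ?case
    proof (intro allI impI)
      fix v :: "'a \<Rightarrow> complex"
      assume vb: "\<forall>i\<in>F. cmod (v i) \<le> 1" and vt: "\<forall>i\<in>F - insert j J. cmod (v i) = 1"
      have jF: "j \<in> F" using insert by auto
      obtain a\<^sub>0 a\<^sub>1 c\<^sub>0 c\<^sub>1 where c1: "\<And>x. edge_coeff1 b F (v(j := x)) = a\<^sub>0 + a\<^sub>1 * x"
        and c0: "\<And>x. edge_coeff0 b F (v(j := x)) = c\<^sub>0 + c\<^sub>1 * x"
        using edge_coeffs_affine[OF fF jF] by metis
      have vb': "\<forall>i\<in>F. cmod ((v(j := x)) i) \<le> 1" if "cmod x \<le> 1" for x
        using vb that by auto
      have "cmod (a\<^sub>0 + a\<^sub>1 * v j) \<le> cmod (c\<^sub>0 + c\<^sub>1 * v j)"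
      proof (rule affine_norm_le_from_circle)
        show "c\<^sub>0 + c\<^sub>1 * x \<noteq> 0" if "cmod x \<le> 1" for x
          using nz[OF vb'[OF that]] c0 by metis
        show "cmod (a\<^sub>0 + a\<^sub>1 * x) \<le> cmod (c\<^sub>0 + c\<^sub>1 * x)" if "cmod x = 1" for x
        proof -
          have "\<forall>i\<in>F - J. cmod ((v(j := x)) i) = 1" using vt that by auto
          thus ?thesis using insert.IH insert.prems vb' that c0 c1 by (metis order.refl subset_insertI2 insert_subset)
        qed
        show "cmod (v j) \<le> 1" using vb jF by auto
      qed
      thus "cmod (edge_coeff1 b F v) \<le> cmod (edge_coeff0 b F v)"
        using c0[of "v j"] c1[of "v j"] by simp
    qed
  qed
  thus ?thesis using fF v by blast
qed


section \<open>Products of points of the disc \<open>|\<zeta> - 1| \<le> 1\<close>\<close>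

lemma ln_cos_le_tangent:
  fixes a x :: real
  assumes a: "0 < a" "a < pi / 2" and x: "0 \<le> x" "x < pi / 2"
  shows "ln (cos x) \<le> ln (cos a) - tan a * (x - a)"
proof -
  define h where "h y = ln (cos y) + tan a * y" for y
  define h' where "h' y = tan a - tan y" for y
  have der: "DERIV h y :> h' y" if "0 \<le> y" "y < pi / 2" for y
  proof -
    have "cos y > 0" using that by (intro cos_gt_zero_pi) auto
    hence "DERIV h y :> inverse (cos y) * - sin y + tan a * 1"
      unfolding h_def by (intro derivative_intros DERIV_chain2[OF DERIV_ln DERIV_cos]) auto
    moreover have "inverse (cos y) * - sin y + tan a * 1 = h' y"
      by (simp add: h'_def tan_def divide_inverse algebra_simps)
    ultimately show ?thesis by simp
  qed
  have "h x \<le> h a"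
  proof (cases x a rule: linorder_cases)
    case less
    obtain y where y: "x < y" "y < a" "h a - h x = (a - x) * h' y"
      using MVT2[OF less, of h h'] der x a by force
    have "tan y < tan a" using y x a by (intro tan_monotone) auto
    hence "(a - x) * h' y > 0" using less by (simp add: h'_def)
    thus ?thesis using y by linarith
  next
    case greater
    obtain y where y: "a < y" "y < x" "h x - h a = (x - a) * h' y"
      using MVT2[OF greater, of h h'] der x a by force
    have "tan a < tan y" using y x a by (intro tan_monotone) auto
    hence "(x - a) * h' y < 0" using greater by (simp add: h'_def mult_pos_neg)
    thus ?thesis using y by linarith
  qed simp
  thus ?thesis by (simp add: h_def algebra_simps)
qed

lemma cos_le_tangent_exp:
  fixes a x :: real
  assumes a: "0 < a" "a < pi / 2" and x: "0 \<le> x" "x < pi / 2"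
  shows "cos x \<le> cos a * exp (- (tan a * (x - a)))"
proof -
  have cx: "cos x > 0" and ca: "cos a > 0" using a x by (auto intro!: cos_gt_zero_pi)
  have "cos x = exp (ln (cos x))" using cx by simp
  also have "\<dots> \<le> exp (ln (cos a) - tan a * (x - a))"
    using ln_cos_le_tangent[OF a x] by simp
  also have "\<dots> = cos a * exp (- (tan a * (x - a)))"
    using ca by (simp add: exp_diff exp_minus divide_inverse)
  finally show ?thesis .
qed

text \<open>Concavity of \<open>ln \<circ> cos\<close>: the product is largest when all angles equal \<open>pi / n\<close>.\<close>

lemma prod_two_cos_le:
  fixes x :: "'i \<Rightarrow> real"
  assumes fin: "finite F" and n: "n \<ge> 3" and card: "card F \<le> n"
    and x: "\<forall>i\<in>F. 0 \<le> x i \<and> x i < pi / 2" and sum: "(\<Sum>i\<in>F. x i) \<ge> pi"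
  shows "(\<Prod>i\<in>F. 2 * cos (x i)) \<le> (2 * cos (pi / n)) ^ n"
proof -
  define a where "a = pi / n"
  have a0: "0 < a" and a3: "a \<le> pi / 3" using n by (auto simp: a_def field_simps)
  hence a2: "a < pi / 2" by linarith
  have ca: "cos a \<ge> 1 / 2"
    using cos_monotone_0_pi_le[of a "pi / 3"] a0 a3 by (simp add: cos_60)
  have "(\<Prod>i\<in>F. cos (x i)) \<le> (\<Prod>i\<in>F. cos a * exp (- (tan a * (x i - a))))"
    using x a0 a2 by (intro prod_mono conjI cos_le_tangent_exp) (auto intro!: cos_ge_zero)
  also have "\<dots> = cos a ^ card F * exp (- (tan a * ((\<Sum>i\<in>F. x i) - card F * a)))"
    using fin by (simp add: prod.distrib exp_sum[symmetric] sum_subtractf sum_distrib_left algebra_simps)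
  also have "\<dots> \<le> cos a ^ card F"
  proof -
    have "card F * a \<le> n * a" using card a0 by (intro mult_right_mono) auto
    also have "\<dots> = pi" using n by (simp add: a_def)
    moreover have "tan a > 0" using a0 a2 by (simp add: tan_gt_zero)
    ultimately have "0 \<le> tan a * ((\<Sum>i\<in>F. x i) - card F * a)"
      using sum by (intro mult_nonneg_nonneg) auto
    thus ?thesis using ca by (intro mult_left_le) auto
  qed
  finally have "(\<Prod>i\<in>F. 2 * cos (x i)) \<le> (2 * cos a) ^ card F"
    by (simp add: prod.distrib power_mult_distrib)
  also have "\<dots> \<le> (2 * cos a) ^ n" using ca card by (intro power_increasing) auto
  finally show ?thesis by (simp add: a_def)
qed

lemma disc_one_norm_Arg:
  fixes \<zeta> :: complex
  assumes nz: "\<zeta> \<noteq> 0" and d: "cmod (\<zeta> - 1) \<le> 1"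
  shows "\<bar>Arg \<zeta>\<bar> < pi / 2" "cmod \<zeta> \<le> 2 * cos (Arg \<zeta>)"
    "cmod (\<zeta> - 1) < 1 \<Longrightarrow> cmod \<zeta> < 2 * cos (Arg \<zeta>)"
proof -
  have pos: "cmod \<zeta> > 0" using nz by simp
  have cos_Arg: "cos (Arg \<zeta>) = Re \<zeta> / cmod \<zeta>" using nz by (rule cos_Arg)
  have sq: "(cmod (\<zeta> - 1))\<^sup>2 = (cmod \<zeta>)\<^sup>2 - 2 * Re \<zeta> + 1"
    unfolding cmod_power2 by (simp add: power2_eq_square algebra_simps)
  have "(cmod (\<zeta> - 1))\<^sup>2 \<le> 1" using d by (simp add: power_le_one)
  hence le: "cmod \<zeta> * cmod \<zeta> \<le> 2 * Re \<zeta>" using sq by (simp add: power2_eq_square)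
  thus "cmod \<zeta> \<le> 2 * cos (Arg \<zeta>)" using pos unfolding cos_Arg by (simp add: field_simps)
  show "cmod \<zeta> < 2 * cos (Arg \<zeta>)" if "cmod (\<zeta> - 1) < 1"
  proof -
    have "(cmod (\<zeta> - 1))\<^sup>2 < 1" using that by (simp add: abs_square_less_1)
    hence "cmod \<zeta> * cmod \<zeta> < 2 * Re \<zeta>" using sq by (simp add: power2_eq_square)
    thus ?thesis using pos unfolding cos_Arg by (simp add: field_simps)
  qed
  have "0 < cmod \<zeta> * cmod \<zeta>" using pos by simp
  hence "Re \<zeta> > 0" using le by linarith
  hence "cos (Arg \<zeta>) > 0" using pos unfolding cos_Arg by simp
  moreover have "\<bar>Arg \<zeta>\<bar> \<le> pi" using Arg_bounded[of \<zeta>] by auto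
  ultimately show "\<bar>Arg \<zeta>\<bar> < pi / 2"
    using cos_monotone_0_pi_le[of "pi / 2" "\<bar>Arg \<zeta>\<bar>"] by (cases "\<bar>Arg \<zeta>\<bar> < pi / 2") auto
qed

lemma prod_rcis:
  assumes "finite F"
  shows "(\<Prod>i\<in>F. rcis (r i) (a i)) = rcis (\<Prod>i\<in>F. r i) (\<Sum>i\<in>F. a i)"
  using assms by (induction F rule: finite_induct) (auto simp: rcis_mult)

lemma sum_abs_Arg_ge_pi_of_prod_neg:
  fixes \<zeta> :: "'i \<Rightarrow> complex"
  assumes fF: "finite F" and nz: "\<forall>i\<in>F. \<zeta> i \<noteq> 0" and prod: "(\<Prod>i\<in>F. \<zeta> i) = of_real t" and t: "t < 0"
  shows "pi \<le> (\<Sum>i\<in>F. \<bar>Arg (\<zeta> i)\<bar>)"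
proof -
  define R where "R = (\<Prod>i\<in>F. cmod (\<zeta> i))"
  define \<Theta> where "\<Theta> = (\<Sum>i\<in>F. Arg (\<zeta> i))"
  have eq: "of_real t = rcis R \<Theta>"
    unfolding prod[symmetric] R_def \<Theta>_def prod_rcis[OF fF, symmetric] by (simp add: rcis_cmod_Arg)
  have "R > 0" unfolding R_def using nz by (intro prod_pos) auto
  hence "\<bar>t\<bar> = R" using arg_cong[OF eq, of cmod] by (simp add: rcis_def norm_mult)
  moreover have "t = R * cos \<Theta>" using arg_cong[OF eq, of Re] by (simp add: rcis_def)
  ultimately have "R * (cos \<Theta> + 1) = 0" using t by (simp add: algebra_simps)
  hence "cos \<Theta> = -1" using \<open>R > 0\<close> by (simp add: add_eq_0_iff)
  hence "\<bar>\<Theta>\<bar> \<ge> pi" using cos_monotone_0_pi[of "\<bar>\<Theta>\<bar>" pi] by force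
  thus ?thesis unfolding \<Theta>_def using sum_abs[of "\<lambda>i. Arg (\<zeta> i)" F] by linarith
qed

text \<open>A negative product of such points needs a total angle of at least \<open>pi\<close>, hence at least
  three factors, and its modulus is at most \<open>\<Prod> 2 cos(Arg \<zeta>\<^sub>i)\<close>.\<close>

lemma negative_real_prod_bound:
  fixes \<zeta> :: "'i \<Rightarrow> complex"
  assumes fF: "finite F" and \<zeta>: "\<forall>i\<in>F. \<zeta> i \<noteq> 0 \<and> cmod (\<zeta> i - 1) \<le> 1"
    and prod: "(\<Prod>i\<in>F. \<zeta> i) = of_real t" and t: "t < 0" and card: "card F \<le> n"
  shows "- t \<le> (2 * cos (pi / n)) ^ n"
    "\<forall>i\<in>F. cmod (\<zeta> i - 1) < 1 \<Longrightarrow> - t < (2 * cos (pi / n)) ^ n"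
proof -
  define \<phi> where "\<phi> i = \<bar>Arg (\<zeta> i)\<bar>" for i
  have \<phi>: "\<phi> i < pi / 2" "cmod (\<zeta> i) \<le> 2 * cos (\<phi> i)" if "i \<in> F" for i
    using disc_one_norm_Arg[of "\<zeta> i"] \<zeta> that by (auto simp: \<phi>_def)
  have sum: "pi \<le> (\<Sum>i\<in>F. \<phi> i)" unfolding \<phi>_def using sum_abs_Arg_ge_pi_of_prod_neg fF \<zeta> prod t by blast
  have "- t = (\<Prod>i\<in>F. cmod (\<zeta> i))" using arg_cong[OF prod, of cmod] t by (simp add: prod_norm)
  have "F \<noteq> {}" using sum pi_gt_zero by (metis not_le sum.empty)
  hence "(\<Sum>i\<in>F. \<phi> i) < real (card F) * (pi / 2)"
    using \<phi> fF sum_strict_mono[of F \<phi> "\<lambda>_. pi / 2"] by auto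
  hence "pi < real (card F) * (pi / 2)" using sum by linarith
  hence "2 * pi < real (card F) * pi" by (simp add: field_simps)
  hence "2 < real (card F)" using pi_gt_zero by (simp add: mult_less_cancel_right)
  hence n3: "n \<ge> 3" using card by linarith
  have bound: "(\<Prod>i\<in>F. 2 * cos (\<phi> i)) \<le> (2 * cos (pi / n)) ^ n"
    using prod_two_cos_le[OF fF n3 card, of \<phi>] sum \<phi> by (auto simp: \<phi>_def)
  have "(\<Prod>i\<in>F. cmod (\<zeta> i)) \<le> (\<Prod>i\<in>F. 2 * cos (\<phi> i))" using \<phi> by (intro prod_mono) auto
  thus "- t \<le> (2 * cos (pi / n)) ^ n" using bound \<open>- t = _\<close> by simp
  assume strict: "\<forall>i\<in>F. cmod (\<zeta> i - 1) < 1"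
  obtain i\<^sub>0 where i\<^sub>0: "i\<^sub>0 \<in> F" using \<open>F \<noteq> {}\<close> by auto
  have "(\<Prod>i\<in>F. cmod (\<zeta> i)) < (\<Prod>i\<in>F. 2 * cos (\<phi> i))"
  proof (rule prod_mono_strict[OF i\<^sub>0 _ fF])
    show "cmod (\<zeta> i\<^sub>0) < 2 * cos (\<phi> i\<^sub>0)"
      using disc_one_norm_Arg(3)[of "\<zeta> i\<^sub>0"] \<zeta> strict i\<^sub>0 by (auto simp: \<phi>_def)
    show "0 < 2 * cos (\<phi> i)" if "i \<in> F" for i
      using \<phi>[OF that] by (intro mult_pos_pos cos_gt_zero_pi) (auto simp: \<phi>_def)
  qed (use \<phi> in auto)
  thus "- t < (2 * cos (pi / n)) ^ n" using bound \<open>- t = _\<close> by simp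
qed

lemma norm_prod_one_plus_le:
  fixes v :: "'a \<Rightarrow> complex"
  assumes "finite F" "\<forall>i\<in>F. cmod (v i) \<le> 1"
  shows "cmod (\<Prod>i\<in>F. 1 + v i) \<le> 2 ^ card F"
    "F \<noteq> {} \<Longrightarrow> \<forall>i\<in>F. cmod (v i) < 1 \<Longrightarrow> cmod (\<Prod>i\<in>F. 1 + v i) < 2 ^ card F"
proof -
  have le: "cmod (1 + v i) \<le> 2" if "i \<in> F" for i
    using norm_triangle_ineq[of 1 "v i"] assms that by auto
  thus "cmod (\<Prod>i\<in>F. 1 + v i) \<le> 2 ^ card F"
    unfolding prod_norm[symmetric] using prod_mono[of F "\<lambda>i. cmod (1 + v i)" "\<lambda>_. 2"] by simp
  assume "F \<noteq> {}" and lt: "\<forall>i\<in>F. cmod (v i) < 1"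
  then obtain i\<^sub>0 where i\<^sub>0: "i\<^sub>0 \<in> F" by auto
  have "(\<Prod>i\<in>F. cmod (1 + v i)) < (\<Prod>i\<in>F. 2)"
  proof (rule prod_mono_strict[OF i\<^sub>0])
    show "cmod (1 + v i\<^sub>0) < 2" using norm_triangle_ineq[of 1 "v i\<^sub>0"] lt i\<^sub>0 by auto
  qed (use assms le in auto)
  thus "cmod (\<Prod>i\<in>F. 1 + v i) < 2 ^ card F" by (simp add: prod_norm)
qed


section \<open>Zero-freeness of the edge polynomials in the critical range\<close>

definition beta_lower :: "nat \<Rightarrow> real" where
  "beta_lower k = - 1 / (2 ^ (k - 1) - 1)"

definition beta_upper :: "nat \<Rightarrow> real" where
  "beta_upper k = 1 / ((2 * cos (pi / real (k - 1))) ^ (k - 1) + 1)"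

lemma cos_pi_div_nonneg: "n \<ge> 2 \<Longrightarrow> cos (pi / real n) \<ge> 0"
  by (rule cos_ge_zero) (auto simp: field_simps intro: order_trans[of _ 0])

lemma beta_lower_neg: "k \<ge> 2 \<Longrightarrow> beta_lower k < 0"
  using one_less_power[of 2 "k - 1"] by (simp add: beta_lower_def)

lemma beta_upper_pos_le_one:
  assumes "k \<ge> 3"
  shows "0 < beta_upper k" "beta_upper k \<le> 1"
proof -
  have "cos (pi / real (k - 1)) \<ge> 0" using assms by (intro cos_pi_div_nonneg) auto
  hence "(2 * cos (pi / real (k - 1))) ^ (k - 1) \<ge> 0" by simp
  thus "0 < beta_upper k" "beta_upper k \<le> 1" by (simp_all add: beta_upper_def)
qed

lemma beta_lower_le_iff:
  assumes "k \<ge> 2" "b < 0"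
  shows "beta_lower k \<le> b \<longleftrightarrow> 2 ^ (k - 1) \<le> (b - 1) / b"
    and "beta_lower k < b \<longleftrightarrow> 2 ^ (k - 1) < (b - 1) / b"
proof -
  have N: "(2::real) ^ (k - 1) - 1 > 0" using one_less_power[of 2 "k - 1"] assms(1) by simp
  have "(b - 1) / b = 1 + 1 / (- b)" using assms(2) by (simp add: field_simps)
  thus "beta_lower k \<le> b \<longleftrightarrow> 2 ^ (k - 1) \<le> (b - 1) / b" "beta_lower k < b \<longleftrightarrow> 2 ^ (k - 1) < (b - 1) / b"
    using N assms(2) by (auto simp: beta_lower_def field_simps)
qed

lemma beta_upper_le_iff:
  assumes "k \<ge> 3" "0 < b"
  shows "b \<le> beta_upper k \<longleftrightarrow> (2 * cos (pi / real (k - 1))) ^ (k - 1) \<le> (1 - b) / b"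
    and "b < beta_upper k \<longleftrightarrow> (2 * cos (pi / real (k - 1))) ^ (k - 1) < (1 - b) / b"
proof -
  have "(2 * cos (pi / real (k - 1))) ^ (k - 1) \<ge> 0" using cos_pi_div_nonneg[of "k - 1"] assms(1) by simp
  thus "b \<le> beta_upper k \<longleftrightarrow> (2 * cos (pi / real (k - 1))) ^ (k - 1) \<le> (1 - b) / b"
    "b < beta_upper k \<longleftrightarrow> (2 * cos (pi / real (k - 1))) ^ (k - 1) < (1 - b) / b"
    using assms(2) by (auto simp: beta_upper_def field_simps)
qed

lemma edge_coeff0_eq_0_iff:
  "b \<noteq> 0 \<Longrightarrow> edge_coeff0 b F v = 0 \<longleftrightarrow> (\<Prod>i\<in>F. 1 + v i) = of_real ((b - 1) / b)"
  by (auto simp: edge_coeff0_def field_simps)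

lemma edge_coeff0_ne_zero_neg:
  assumes k: "k \<ge> 2" and b: "b < 0" and F: "finite F" "F \<noteq> {}" "card F \<le> k - 1"
    and v: "\<forall>i\<in>F. cmod (v i) \<le> 1"
    and range: "beta_lower k < b \<or> (beta_lower k \<le> b \<and> (\<forall>i\<in>F. cmod (v i) < 1))"
  shows "edge_coeff0 b F v \<noteq> 0"
proof
  assume "edge_coeff0 b F v = 0"
  hence prod: "(\<Prod>i\<in>F. 1 + v i) = of_real ((b - 1) / b)" using b edge_coeff0_eq_0_iff[of b F v] by auto
  have "(b - 1) / b > 0" using b by (intro divide_neg_neg) auto
  hence P: "cmod (\<Prod>i\<in>F. 1 + v i) = (b - 1) / b" unfolding prod norm_of_real by (rule abs_of_pos)
  have pow: "(2::real) ^ card F \<le> 2 ^ (k - 1)" using F by (intro power_increasing) auto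
  have "beta_lower k \<le> b" using range by auto
  hence le: "2 ^ (k - 1) \<le> (b - 1) / b" using beta_lower_le_iff(1)[OF k b] by simp
  show False
  proof (cases "beta_lower k < b")
    case True
    hence "2 ^ (k - 1) < (b - 1) / b" using beta_lower_le_iff(2)[OF k b] by simp
    thus False using P pow norm_prod_one_plus_le(1)[OF F(1) v] by linarith
  next
    case False
    hence "\<forall>i\<in>F. cmod (v i) < 1" using range by auto
    hence "cmod (\<Prod>i\<in>F. 1 + v i) < 2 ^ card F" by (rule norm_prod_one_plus_le(2)[OF F(1) v F(2)])
    thus False using P pow le by linarith
  qed
qed

lemma edge_coeff0_ne_zero_pos:
  assumes k: "k \<ge> 3" and b: "0 < b" "b < 1" and F: "finite F" "card F \<le> k - 1"
    and v: "\<forall>i\<in>F. cmod (v i) \<le> 1"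
    and range: "b < beta_upper k \<or> (b \<le> beta_upper k \<and> (\<forall>i\<in>F. cmod (v i) < 1))"
  shows "edge_coeff0 b F v \<noteq> 0"
proof
  assume "edge_coeff0 b F v = 0"
  hence prod: "(\<Prod>i\<in>F. 1 + v i) = of_real ((b - 1) / b)" using b edge_coeff0_eq_0_iff[of b F v] by auto
  have nz: "1 + v i \<noteq> 0" if "i \<in> F" for i
  proof
    assume "1 + v i = 0"
    hence "(\<Prod>i\<in>F. 1 + v i) = 0" using that F(1) by (meson prod_zero_iff)
    thus False using prod b by simp
  qed
  have t: "(b - 1) / b < 0" "- ((b - 1) / b) = (1 - b) / b" using b by (auto simp: divide_neg_pos field_simps)
  have \<zeta>: "\<forall>i\<in>F. 1 + v i \<noteq> 0 \<and> cmod (1 + v i - 1) \<le> 1" using nz v by simp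
  note bound = negative_real_prod_bound[OF F(1) \<zeta> prod t(1) F(2), unfolded t(2)]
  have "b \<le> beta_upper k" using range by auto
  hence le: "(2 * cos (pi / real (k - 1))) ^ (k - 1) \<le> (1 - b) / b" using beta_upper_le_iff(1)[OF k b(1)] by simp
  show False
  proof (cases "b < beta_upper k")
    case True
    hence "(2 * cos (pi / real (k - 1))) ^ (k - 1) < (1 - b) / b" using beta_upper_le_iff(2)[OF k b(1)] by simp
    thus False using bound(1) by linarith
  next
    case False
    hence "\<forall>i\<in>F. cmod (1 + v i - 1) < 1" using range by auto
    thus False using bound(2) le by linarith
  qed
qed

lemma edge_coeff0_ne_zero:
  assumes k: "k \<ge> 3" and F: "finite F" "F \<noteq> {}" "card F \<le> k - 1" and v: "\<forall>i\<in>F. cmod (v i) \<le> 1"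
    and b: "(beta_lower k \<le> b \<and> b \<le> beta_upper k \<and> (\<forall>i\<in>F. cmod (v i) < 1))
            \<or> (beta_lower k < b \<and> b < beta_upper k)"
  shows "edge_coeff0 b F v \<noteq> 0"
proof -
  consider "b < 0" | "b = 0" | "0 < b" "b < 1" | "b = 1" using b beta_upper_pos_le_one(2)[OF k] by linarith
  thus ?thesis
  proof cases
    case 1 thus ?thesis using edge_coeff0_ne_zero_neg[OF _ 1 F v] k b by auto
  next
    case 2 thus ?thesis by (simp add: edge_coeff0_def)
  next
    case 3 thus ?thesis using edge_coeff0_ne_zero_pos[OF k 3 F(1,3) v] b by auto
  next
    case 4
    show ?thesis
    proof
      assume "edge_coeff0 b F v = 0"
      then obtain i where "i \<in> F" "1 + v i = 0" using 4 F(1) by (auto simp: edge_coeff0_def)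
      hence "cmod (v i) = 1" by (simp add: add_eq_0_iff)
      thus False using b 4 \<open>i \<in> F\<close> beta_upper_pos_le_one(2)[OF k] by auto
    qed
  qed
qed

text \<open>At the endpoints of the critical range the bound \<open>|edge_coeff1| \<le> |edge_coeff0|\<close> follows from
  the interior of the range by continuity in \<open>b\<close>.\<close>

lemma zero_free_edge_poly:
  assumes k: "k \<ge> 3" and fe: "finite e" and card: "2 \<le> card e" "card e \<le> k"
    and b: "beta_lower k \<le> b" "b \<le> beta_upper k"
  shows "zero_free_polydisc e (edge_poly e (of_real b))"
  unfolding zero_free_polydisc_def
proof (intro allI impI)
  fix w :: "'a \<Rightarrow> complex"
  assume w: "\<forall>x\<in>e. cmod (w x) < 1"
  obtain x\<^sub>0 where x\<^sub>0: "x\<^sub>0 \<in> e" using card by fastforce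
  define F where "F = e - {x\<^sub>0}"
  have "card F = card e - 1" using x\<^sub>0 by (simp add: F_def)
  hence "1 \<le> card F" "card F \<le> k - 1" using card by auto
  moreover have "finite F" using fe by (simp add: F_def)
  ultimately have F: "finite F" "F \<noteq> {}" "card F \<le> k - 1" by auto
  have wF: "\<forall>i\<in>F. cmod (w i) < 1" "\<forall>i\<in>F. cmod (w i) \<le> 1" using w by (auto simp: F_def less_imp_le)
  have range: "beta_lower k < beta_upper k"
    using beta_lower_neg[of k] beta_upper_pos_le_one(1)[OF k] k by simp
  have nz: "edge_coeff0 b F w \<noteq> 0" using edge_coeff0_ne_zero[OF k F wF(2)] b wF(1) by simp
  define h where "h c = cmod (edge_coeff0 c F w) - cmod (edge_coeff1 c F w)" for c
  have "h b \<ge> 0"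
  proof (rule continuous_ge_on_closure[where S="{beta_lower k<..<beta_upper k}" and f=h and x=b and a=0])
    show "continuous_on (closure {beta_lower k<..<beta_upper k}) h"
      unfolding h_def edge_coeff0_def edge_coeff1_def by (intro continuous_intros)
    show "h c \<ge> 0" if "c \<in> {beta_lower k<..<beta_upper k}" for c
      using norm_edge_coeff1_le[OF F(1) edge_coeff0_ne_zero[OF k F] wF(2), of c] that
      by (simp add: h_def)
  qed (use range b in simp)
  hence le: "cmod (edge_coeff1 b F w) \<le> cmod (edge_coeff0 b F w)" by (simp add: h_def)
  show "edge_poly e (of_real b) w \<noteq> 0"
  proof
    assume "edge_poly e (of_real b) w = 0"
    hence "edge_coeff0 b F w = - (edge_coeff1 b F w * w x\<^sub>0)"
      unfolding edge_poly_split[OF fe x\<^sub>0] F_def by (simp add: eq_neg_iff_add_eq_0)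
    hence "cmod (edge_coeff0 b F w) = cmod (edge_coeff1 b F w) * cmod (w x\<^sub>0)" by (simp add: norm_mult)
    also have "\<dots> \<le> cmod (edge_coeff0 b F w) * cmod (w x\<^sub>0)" using le by (simp add: mult_right_mono)
    also have "\<dots> < cmod (edge_coeff0 b F w)" using w x\<^sub>0 nz by simp
    finally show False by simp
  qed
qed

theorem ising_Z_zeros_on_unit_circle:
  assumes k: "k \<ge> 3" and hg: "hypergraph V E" and card: "\<forall>e\<in>E. 2 \<le> card e \<and> card e \<le> k"
    and b: "beta_lower k \<le> b" "b \<le> beta_upper k" and Z: "ising_Z V E b z = 0"
  shows "cmod z = 1"
proof (rule ising_Z_zeros_on_unit_circle_of_zero_free[OF hg _ Z])
  have fV: "finite V" and eV: "\<forall>e\<in>E. e \<subseteq> V" using hg by (auto simp: hypergraph_def)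
  show "zero_free_polydisc V (ising_multi V E (of_real b))"
  proof (rule zero_free_ising_multi[OF fV eV], intro ballI)
    fix e assume "e \<in> E"
    thus "zero_free_polydisc e (edge_poly e (of_real b))"
      using zero_free_edge_poly[OF k _ _ _ b] card eV fV by (meson finite_subset)
  qed
qed


section \<open>Dickson polynomials\<close>

text \<open>The Dickson polynomials \<open>D\<^sub>n(y, 1)\<close>, characterised by \<open>D\<^sub>n(s + 1/s) = s\<^sup>n + 1/s\<^sup>n\<close>.\<close>

fun dickson :: "nat \<Rightarrow> complex poly" where
  "dickson 0 = [:2:]"
| "dickson (Suc 0) = [:0, 1:]"
| "dickson (Suc (Suc n)) = [:0, 1:] * dickson (Suc n) - dickson n"

lemma poly_dickson_reciprocal:
  assumes "s \<noteq> 0"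
  shows "poly (dickson n) (s + 1 / s) = s ^ n + 1 / s ^ n"
proof (induction n rule: dickson.induct)
  case (3 n)
  have "poly (dickson (Suc (Suc n))) (s + 1 / s) = (s + 1 / s) * (s ^ Suc n + 1 / s ^ Suc n) - (s ^ n + 1 / s ^ n)"
    using 3 by simp
  also have "\<dots> = s ^ Suc (Suc n) + 1 / s ^ Suc (Suc n)"
    using assms by (simp add: field_simps)
  finally show ?case .
qed simp_all

lemma poly_dickson_2cos: "poly (dickson n) (of_real (2 * cos \<psi>)) = of_real (2 * cos (n * \<psi>))"
proof -
  have "of_real (2 * cos \<psi>) = cis \<psi> + 1 / cis \<psi>" "of_real (2 * cos (n * \<psi>)) = cis \<psi> ^ n + 1 / cis \<psi> ^ n"
    unfolding Complex.DeMoivre by (simp_all add: complex_eq_iff divide_inverse)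
  thus ?thesis by (simp add: poly_dickson_reciprocal)
qed

lemma poly_pderiv_dickson_2cos:
  assumes s: "sin \<psi> \<noteq> 0"
  shows "poly (pderiv (dickson n)) (of_real (2 * cos \<psi>)) = of_real (n * sin (n * \<psi>) / sin \<psi>)"
proof (induction n rule: dickson.induct)
  case (3 n)
  define u where "u = real (Suc n) * \<psi>"
  have angles: "real (Suc (Suc n)) * \<psi> = u + \<psi>" "real n * \<psi> = u - \<psi>"
    by (simp_all add: u_def algebra_simps)
  have ident: "2 * c * (n\<^sub>1 * x / s) + 2 * y - n * sm / s = n\<^sub>2 * sp / s"
    if "s \<noteq> 0" "n\<^sub>1 = n + 1" "n\<^sub>2 = n + 2" "sm = x * c - y * s" "sp = x * c + y * s" for s c x y n\<^sub>1 n\<^sub>2 sm sp :: real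
  proof -
    have "2 * c * ((n + 1) * x) + 2 * y * s - n * (x * c - y * s) = (n + 2) * (x * c + y * s)"
      by (simp add: algebra_simps)
    thus ?thesis unfolding that(2-5) using that(1) by (simp add: field_simps)
  qed
  have "2 * cos \<psi> * (Suc n * sin u / sin \<psi>) + 2 * cos u - n * sin (u - \<psi>) / sin \<psi>
      = Suc (Suc n) * sin (u + \<psi>) / sin \<psi>"
    by (rule ident[OF s]) (simp_all add: sin_add sin_diff)
  hence "of_real (2 * cos \<psi>) * of_real (Suc n * sin u / sin \<psi>) + of_real (2 * cos u)
      - of_real (n * sin (u - \<psi>) / sin \<psi>) = (of_real (Suc (Suc n) * sin (u + \<psi>) / sin \<psi>) :: complex)"
    by (metis of_real_add of_real_diff of_real_mult)
  moreover have "pderiv (dickson (Suc (Suc n))) = [:0, 1:] * pderiv (dickson (Suc n)) + dickson (Suc n) - pderiv (dickson n)"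
    by (simp add: pderiv_mult pderiv_diff pderiv_pCons)
  moreover note 3[unfolded u_def[symmetric] angles] poly_dickson_2cos[of "Suc n" \<psi>, folded u_def]
  ultimately show ?case unfolding angles by simp
qed (use s in \<open>simp_all add: pderiv_pCons\<close>)

lemma poly_pderiv2_dickson_2cos:
  assumes s: "sin \<psi> \<noteq> 0"
  shows "poly (pderiv (pderiv (dickson n))) (of_real (2 * cos \<psi>)) =
    of_real (n * (sin (n * \<psi>) * cos \<psi> - n * cos (n * \<psi>) * sin \<psi>) / (2 * sin \<psi> ^ 3))"
proof (induction n rule: dickson.induct)
  case (3 n)
  define u where "u = real (Suc n) * \<psi>"
  have angles: "real (Suc (Suc n)) * \<psi> = u + \<psi>" "real n * \<psi> = u - \<psi>"
    by (simp_all add: u_def algebra_simps)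
  have ident: "2 * c * (n\<^sub>1 * (x * c - n\<^sub>1 * y * s) / (2 * s ^ 3)) + 2 * (n\<^sub>1 * x / s)
      - n * (sm * c - n * cm * s) / (2 * s ^ 3) = n\<^sub>2 * (sp * c - n\<^sub>2 * cp * s) / (2 * s ^ 3)"
    if "s \<noteq> 0" "n\<^sub>1 = n + 1" "n\<^sub>2 = n + 2" "sm = x * c - y * s" "sp = x * c + y * s"
      "cm = y * c + x * s" "cp = y * c - x * s" for s c x y n\<^sub>1 n\<^sub>2 sm sp cm cp :: real
  proof -
    have "2 * c * ((n + 1) * (x * c - (n + 1) * y * s)) + 2 * ((n + 1) * x) * (2 * s\<^sup>2)
        - n * ((x * c - y * s) * c - n * (y * c + x * s) * s)
        = (n + 2) * ((x * c + y * s) * c - (n + 2) * (y * c - x * s) * s)"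
      by (simp add: algebra_simps power2_eq_square)
    thus ?thesis unfolding that(2-7) using that(1) by (simp add: field_simps power2_eq_square power3_eq_cube)
  qed
  have "2 * cos \<psi> * (Suc n * (sin u * cos \<psi> - Suc n * cos u * sin \<psi>) / (2 * sin \<psi> ^ 3))
      + 2 * (Suc n * sin u / sin \<psi>)
      - n * (sin (u - \<psi>) * cos \<psi> - n * cos (u - \<psi>) * sin \<psi>) / (2 * sin \<psi> ^ 3)
      = Suc (Suc n) * (sin (u + \<psi>) * cos \<psi> - Suc (Suc n) * cos (u + \<psi>) * sin \<psi>) / (2 * sin \<psi> ^ 3)"
    by (rule ident[OF s]) (simp_all add: sin_add sin_diff cos_add cos_diff)
  from arg_cong[where f=complex_of_real, OF this]
  have "of_real (2 * cos \<psi>) * of_real (Suc n * (sin u * cos \<psi> - Suc n * cos u * sin \<psi>) / (2 * sin \<psi> ^ 3))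
      + 2 * of_real (Suc n * sin u / sin \<psi>)
      - of_real (n * (sin (u - \<psi>) * cos \<psi> - n * cos (u - \<psi>) * sin \<psi>) / (2 * sin \<psi> ^ 3))
      = (of_real (Suc (Suc n) * (sin (u + \<psi>) * cos \<psi> - Suc (Suc n) * cos (u + \<psi>) * sin \<psi>) / (2 * sin \<psi> ^ 3)) :: complex)"
    by (simp only: of_real_add of_real_diff of_real_mult of_real_divide of_real_numeral of_real_power)
  moreover have "pderiv (pderiv (dickson (Suc (Suc n)))) =
      [:0, 1:] * pderiv (pderiv (dickson (Suc n))) + 2 * pderiv (dickson (Suc n)) - pderiv (pderiv (dickson n))"
    by (simp add: pderiv_mult pderiv_diff pderiv_pCons pderiv_add algebra_simps)
  moreover note 3[unfolded u_def[symmetric] angles] poly_pderiv_dickson_2cos[OF s, of "Suc n", folded u_def]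
  ultimately show ?case unfolding angles by simp
qed (use s in \<open>simp_all add: pderiv_pCons\<close>)

lemma coeff_dickson: "j > n \<Longrightarrow> coeff (dickson n) j = 0" and lead_coeff_dickson: "n \<ge> 1 \<Longrightarrow> coeff (dickson n) n = 1"
proof -
  have "(\<forall>j>n. coeff (dickson n) j = 0) \<and> (n \<ge> 1 \<longrightarrow> coeff (dickson n) n = 1)"
    by (induction n rule: dickson.induct) (auto simp: coeff_pCons split: nat.splits)
  thus "j > n \<Longrightarrow> coeff (dickson n) j = 0" "n \<ge> 1 \<Longrightarrow> coeff (dickson n) n = 1" by auto
qed


section \<open>Laguerre's inequality\<close>

definition real_root_poly :: "(nat \<Rightarrow> real) \<Rightarrow> nat \<Rightarrow> complex poly" where
  "real_root_poly \<rho> n = (\<Prod>i<n. [:- of_real (\<rho> i), 1:])"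

lemma poly_real_root_poly_derivs:
  assumes "\<forall>i<n. x \<noteq> \<rho> i"
  defines "A \<equiv> \<lambda>n. \<Sum>i<n. 1 / (x - \<rho> i)" and "B \<equiv> \<lambda>n. \<Sum>i<n. (1 / (x - \<rho> i))\<^sup>2"
  shows "poly (real_root_poly \<rho> n) (of_real x) = of_real (\<Prod>i<n. x - \<rho> i)
     \<and> poly (pderiv (real_root_poly \<rho> n)) (of_real x) = poly (real_root_poly \<rho> n) (of_real x) * of_real (A n)
     \<and> poly (pderiv (pderiv (real_root_poly \<rho> n))) (of_real x)
         = poly (real_root_poly \<rho> n) (of_real x) * of_real ((A n)\<^sup>2 - B n)"
  using assms(1)
proof (induction n)
  case 0
  show ?case by (simp add: real_root_poly_def A_def B_def)
next
  case (Suc n)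
  define d where "d = x - \<rho> n"
  have "d \<noteq> 0" using Suc.prems by (auto simp: d_def)
  define u where "u = poly (real_root_poly \<rho> n) (of_real x)"
  let ?L = "[:- of_real (\<rho> n), 1:] :: complex poly"
  have IH: "u = of_real (\<Prod>i<n. x - \<rho> i)"
    "poly (pderiv (real_root_poly \<rho> n)) (of_real x) = u * of_real (A n)"
    "poly (pderiv (pderiv (real_root_poly \<rho> n))) (of_real x) = u * of_real ((A n)\<^sup>2 - B n)"
    using Suc by (auto simp: u_def)
  have P: "real_root_poly \<rho> (Suc n) = real_root_poly \<rho> n * ?L" by (simp add: real_root_poly_def)
  have dL: "pderiv ?L = 1" by (simp add: pderiv_pCons)
  have P1: "pderiv (real_root_poly \<rho> (Suc n)) = real_root_poly \<rho> n + ?L * pderiv (real_root_poly \<rho> n)"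
    unfolding P pderiv_mult dL by simp
  have P2: "pderiv (pderiv (real_root_poly \<rho> (Suc n))) = 2 * pderiv (real_root_poly \<rho> n) + ?L * pderiv (pderiv (real_root_poly \<rho> n))"
    unfolding P1 pderiv_add pderiv_mult dL by (simp only: mult_1_right mult_2 add_ac)
  have L: "poly ?L (of_real x) = of_real d" by (simp add: d_def)
  have AB: "A (Suc n) = A n + 1 / d" "B (Suc n) = B n + (1 / d)\<^sup>2" by (simp_all add: A_def B_def d_def)
  have V: "poly (real_root_poly \<rho> (Suc n)) (of_real x) = u * of_real d"
    unfolding P poly_mult L by (simp add: u_def)
  show ?case
  proof (intro conjI)
    show "poly (real_root_poly \<rho> (Suc n)) (of_real x) = of_real (\<Prod>i<Suc n. x - \<rho> i)"
      using V IH(1) by (simp add: d_def)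
    show "poly (pderiv (real_root_poly \<rho> (Suc n))) (of_real x) = poly (real_root_poly \<rho> (Suc n)) (of_real x) * of_real (A (Suc n))"
      unfolding P1 poly_add poly_mult L IH(2) V AB using \<open>d \<noteq> 0\<close> by (simp add: u_def field_simps)
    show "poly (pderiv (pderiv (real_root_poly \<rho> (Suc n)))) (of_real x)
        = poly (real_root_poly \<rho> (Suc n)) (of_real x) * of_real ((A (Suc n))\<^sup>2 - B (Suc n))"
      unfolding P2 poly_add poly_mult L IH(2,3) V AB using \<open>d \<noteq> 0\<close>
      by (simp add: field_simps power2_eq_square)
  qed
qed

lemma laguerre_inequality:
  assumes "\<forall>i<n. x \<noteq> \<rho> i"
  shows "\<exists>L\<ge>0. (of_nat n - 1) * (poly (pderiv (real_root_poly \<rho> n)) (of_real x))\<^sup>2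
          - of_nat n * poly (real_root_poly \<rho> n) (of_real x) * poly (pderiv (pderiv (real_root_poly \<rho> n))) (of_real x)
          = of_real L"
proof -
  define A where "A = (\<Sum>i<n. 1 / (x - \<rho> i))"
  define B where "B = (\<Sum>i<n. (1 / (x - \<rho> i))\<^sup>2)"
  define p where "p = (\<Prod>i<n. x - \<rho> i)"
  note D = poly_real_root_poly_derivs[OF assms, folded A_def B_def p_def]
  note D0 = D[THEN conjunct1] and D1 = D[THEN conjunct2, THEN conjunct1] and D2 = D[THEN conjunct2, THEN conjunct2]
  have "A\<^sup>2 \<le> B * n"
    unfolding A_def B_def using sum_squared_le_sum_of_squares[of "\<lambda>i. 1 / (x - \<rho> i)" "{..<n}"] by simp
  moreover have "(of_nat n - 1) * (poly (pderiv (real_root_poly \<rho> n)) (of_real x))\<^sup>2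
          - of_nat n * poly (real_root_poly \<rho> n) (of_real x) * poly (pderiv (pderiv (real_root_poly \<rho> n))) (of_real x)
        = of_real (p\<^sup>2 * (B * n - A\<^sup>2))"
    unfolding D1 D2 unfolding D0 by (simp add: power2_eq_square algebra_simps)
  ultimately show ?thesis by (intro exI[of _ "p\<^sup>2 * (B * n - A\<^sup>2)"]) auto
qed


section \<open>Zeros off the unit circle outside the critical range\<close>

lemma ising_Z_single_edge:
  assumes "m \<ge> 1"
  shows "ising_Z {0..<m} {{0..<m}} b z = (1 - of_real b) * (1 + z ^ m) + of_real b * (1 + z) ^ m"
proof -
  define e :: "nat set" where "e = {0..<m}"
  have "ising_multi e {e} (of_real b) (\<lambda>_. z) = edge_poly e (of_real b) (\<lambda>_. z)"
    unfolding ising_multi_def edge_poly_def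
  proof (rule sum.cong[OF refl])
    fix S assume "S \<in> Pow e"
    hence "cut_edges e {e} S = (if S \<noteq> {} \<and> S \<noteq> e then {e} else {})"
      unfolding cut_edges_def by auto
    thus "of_real b ^ card (cut_edges e {e} S) * (\<Prod>v\<in>S. z) = cut_weight e (of_real b) S * (\<Prod>v\<in>S. z)"
      by (simp add: cut_weight_def)
  qed
  thus ?thesis using assms by (simp add: ising_Z_eq_ising_multi e_def edge_poly_eq)
qed

lemma hypergraph_single_edge: "hypergraph {0..<m} {{0..<m::nat}}"
  by (simp add: hypergraph_def)

text \<open>With \<open>z = s\<^sup>2\<close> and \<open>y = s + 1/s\<close>, the single-edge polynomial of size \<open>k\<close> becomes \<open>s\<^sup>k\<close> times
  the following polynomial in \<open>y\<close>.\<close>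

definition reduced_edge_poly :: "real \<Rightarrow> nat \<Rightarrow> complex poly" where
  "reduced_edge_poly b k = smult (1 - of_real b) (dickson k) + smult (of_real b) (monom 1 k)"

lemma degree_reduced_edge_poly:
  assumes "k \<ge> 1"
  shows "degree (reduced_edge_poly b k) = k" "lead_coeff (reduced_edge_poly b k) = 1"
proof -
  have lead: "coeff (reduced_edge_poly b k) k = 1"
    using lead_coeff_dickson[OF assms] by (simp add: reduced_edge_poly_def coeff_monom)
  have "coeff (reduced_edge_poly b k) j = 0" if "j > k" for j
    using coeff_dickson[OF that] that by (simp add: reduced_edge_poly_def coeff_monom)
  hence "degree (reduced_edge_poly b k) \<le> k" by (intro degree_le) auto
  moreover have "k \<le> degree (reduced_edge_poly b k)" using lead by (intro le_degree) simp
  ultimately show deg: "degree (reduced_edge_poly b k) = k" by simp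
  show "lead_coeff (reduced_edge_poly b k) = 1" using lead deg by simp
qed

lemma single_edge_poly_eq_reduced:
  assumes s: "s \<noteq> 0"
  shows "(1 - of_real b) * (1 + (s\<^sup>2) ^ k) + of_real b * (1 + s\<^sup>2) ^ k = s ^ k * poly (reduced_edge_poly b k) (s + 1 / s)"
proof -
  have "poly (reduced_edge_poly b k) (s + 1 / s) = (1 - of_real b) * (s ^ k + 1 / s ^ k) + of_real b * (s + 1 / s) ^ k"
    by (simp add: reduced_edge_poly_def poly_dickson_reciprocal[OF s] poly_monom)
  hence "s ^ k * poly (reduced_edge_poly b k) (s + 1 / s)
      = (1 - of_real b) * (s ^ k * (s ^ k + 1 / s ^ k)) + of_real b * (s ^ k * (s + 1 / s) ^ k)"
    by (simp only: distrib_left mult.left_commute)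
  also have "s ^ k * (s + 1 / s) ^ k = (s * (s + 1 / s)) ^ k" by (simp only: power_mult_distrib)
  also have "s * (s + 1 / s) = 1 + s\<^sup>2" using s by (simp add: field_simps power2_eq_square)
  also have "s ^ k * (s ^ k + 1 / s ^ k) = 1 + (s\<^sup>2) ^ k"
  proof -
    have "s ^ k * (s ^ k + 1 / s ^ k) = s ^ k * s ^ k + 1" using s by (simp add: field_simps)
    also have "s ^ k * s ^ k = (s\<^sup>2) ^ k" by (simp add: power_mult_distrib[symmetric] power2_eq_square)
    finally show ?thesis by simp
  qed
  finally show ?thesis by simp
qed

lemma single_edge_zero_off_circle_of_nonreal_root:
  assumes root: "poly (reduced_edge_poly b k) y = 0" and y: "Im y \<noteq> 0"
  shows "\<exists>z. (1 - of_real b) * (1 + z ^ k) + of_real b * (1 + z) ^ k = 0 \<and> cmod z \<noteq> 1"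
proof -
  \<comment> \<open>a root of \<open>s\<^sup>2 - y s + 1\<close>\<close>
  define s where "s = (y + csqrt (y\<^sup>2 - 4)) / 2"
  have "s\<^sup>2 - y * s + 1 = 0"
    unfolding s_def by (simp add: power2_eq_square field_simps) (simp add: power2_csqrt[unfolded power2_eq_square])
  hence quad: "s * s + 1 = y * s" by (simp add: power2_eq_square algebra_simps)
  hence "s \<noteq> 0" by auto
  hence sy: "s + 1 / s = y" using quad by (simp add: field_simps)
  show ?thesis
  proof (intro exI conjI)
    show "(1 - of_real b) * (1 + (s\<^sup>2) ^ k) + of_real b * (1 + s\<^sup>2) ^ k = 0"
      unfolding single_edge_poly_eq_reduced[OF \<open>s \<noteq> 0\<close>] sy root by simp
    show "cmod (s\<^sup>2) \<noteq> 1"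
    proof
      assume "cmod (s\<^sup>2) = 1"
      hence "cmod s = 1" using norm_ge_zero[of s] by (auto simp: norm_power power2_eq_1_iff)
      hence "1 / s = cnj s" using \<open>s \<noteq> 0\<close> complex_norm_square[of s] by (simp add: field_simps)
      hence "Im y = 0" using sy by auto
      thus False using y by simp
    qed
  qed
qed

lemma poly_reduced_edge_poly_derivs:
  "poly (reduced_edge_poly b k) x = (1 - of_real b) * poly (dickson k) x + of_real b * x ^ k"
  "poly (pderiv (reduced_edge_poly b k)) x = (1 - of_real b) * poly (pderiv (dickson k)) x + of_real b * (of_nat k * x ^ (k - 1))"
  "poly (pderiv (pderiv (reduced_edge_poly b k))) x
     = (1 - of_real b) * poly (pderiv (pderiv (dickson k))) x + of_real b * (of_nat k * of_nat (k - 1) * x ^ (k - 2))"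
proof -
  show "poly (reduced_edge_poly b k) x = (1 - of_real b) * poly (dickson k) x + of_real b * x ^ k"
    by (simp add: reduced_edge_poly_def poly_monom)
  show "poly (pderiv (reduced_edge_poly b k)) x = (1 - of_real b) * poly (pderiv (dickson k)) x + of_real b * (of_nat k * x ^ (k - 1))"
    by (simp add: reduced_edge_poly_def pderiv_add pderiv_smult pderiv_monom poly_monom)
  have "k - 1 - 1 = k - 2" by simp
  hence "pderiv (pderiv (reduced_edge_poly b k)) = smult (1 - of_real b) (pderiv (pderiv (dickson k)))
      + smult (of_real b) (monom (of_nat (k - 1) * of_nat k) (k - 2))"
    by (simp only: reduced_edge_poly_def pderiv_add pderiv_smult pderiv_monom mult_1_right)
  thus "poly (pderiv (pderiv (reduced_edge_poly b k))) x
     = (1 - of_real b) * poly (pderiv (pderiv (dickson k))) x + of_real b * (of_nat k * of_nat (k - 1) * x ^ (k - 2))"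
    by (simp add: poly_monom mult.commute)
qed

text \<open>At \<open>2 cos \<psi>\<close> with \<open>\<psi> = pi / (k - 1)\<close> the Dickson values are explicit, since \<open>k \<psi> = pi + \<psi>\<close>.\<close>

lemma poly_reduced_edge_poly_critical:
  assumes k: "k \<ge> 3"
  defines "c \<equiv> cos (pi / real (k - 1))" and "s \<equiv> sin (pi / real (k - 1))"
    and "W \<equiv> (2 * cos (pi / real (k - 1))) ^ (k - 2)"
  shows "poly (reduced_edge_poly b k) (of_real (2 * c)) = of_real ((1 - b) * (2 * (- c)) + b * (4 * c\<^sup>2 * W))"
    and "poly (pderiv (reduced_edge_poly b k)) (of_real (2 * c))
           = of_real ((1 - b) * (real k * (- s) / s) + b * (real k * (2 * c * W)))"
    and "poly (pderiv (pderiv (reduced_edge_poly b k))) (of_real (2 * c))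
           = of_real ((1 - b) * (real k * ((- s) * c - real k * (- c) * s) / (2 * s ^ 3)) + b * (real k * (real k - 1) * W))"
proof -
  define a where "a = pi / real (k - 1)"
  have "0 < a" "a < pi" using k by (auto simp: a_def field_simps)
  hence s: "sin a \<noteq> 0" using sin_gt_zero by force
  have "real k * a = pi + a" using k by (simp add: a_def field_simps of_nat_diff)
  hence cka: "cos (real k * a) = - c" and ska: "sin (real k * a) = - s"
    by (simp_all add: c_def s_def a_def cos_add sin_add)
  have k_eq: "k - 1 = Suc (k - 2)" "k = Suc (Suc (k - 2))" using k by simp_all
  have W: "W = (2 * c) ^ (k - 2)" by (simp add: W_def c_def)
  have W1: "(2 * c) ^ (k - 1) = 2 * c * W" unfolding W k_eq(1) by (simp only: power_Suc)
  have "(2 * c) ^ k = 2 * c * (2 * c * W)" unfolding W by (subst k_eq(2)) (simp only: power_Suc)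
  hence "(2 * c) ^ k = 4 * c\<^sup>2 * W" by (simp add: power2_eq_square)
  hence W0: "(of_real (2 * c) :: complex) ^ k = of_real (4 * c\<^sup>2 * W)" by (simp only: of_real_power[symmetric])
  have W1': "(of_real (2 * c) :: complex) ^ (k - 1) = of_real (2 * c * W)" by (simp only: of_real_power[symmetric] W1)
  have x\<^sub>0: "2 * c = 2 * cos a" by (simp add: c_def a_def)
  show "poly (reduced_edge_poly b k) (of_real (2 * c)) = of_real ((1 - b) * (2 * (- c)) + b * (4 * c\<^sup>2 * W))"
    unfolding poly_reduced_edge_poly_derivs(1) W0 unfolding x\<^sub>0 poly_dickson_2cos cka by (simp add: c_def a_def)
  show "poly (pderiv (reduced_edge_poly b k)) (of_real (2 * c))
      = of_real ((1 - b) * (real k * (- s) / s) + b * (real k * (2 * c * W)))"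
    unfolding poly_reduced_edge_poly_derivs(2) W1' unfolding x\<^sub>0 poly_pderiv_dickson_2cos[OF s] ska
    by (simp add: c_def s_def a_def)
  have "of_nat (k - 1) = (of_real (real k - 1) :: complex)" using k by (simp add: of_nat_diff)
  thus "poly (pderiv (pderiv (reduced_edge_poly b k))) (of_real (2 * c))
      = of_real ((1 - b) * (real k * ((- s) * c - real k * (- c) * s) / (2 * s ^ 3)) + b * (real k * (real k - 1) * W))"
    unfolding poly_reduced_edge_poly_derivs(3) x\<^sub>0 poly_pderiv2_dickson_2cos[OF s] ska cka
    by (simp add: c_def s_def a_def W)
qed

lemma laguerre_fails_for_reduced_edge_poly:
  assumes k: "k \<ge> 4" and b: "beta_upper k < b" "b < 1"
  defines "x\<^sub>0 \<equiv> 2 * cos (pi / real (k - 1))" and "P \<equiv> reduced_edge_poly b k"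
  shows "poly P (of_real x\<^sub>0) \<noteq> 0"
    and "\<exists>L<0. (of_nat k - 1) * (poly (pderiv P) (of_real x\<^sub>0))\<^sup>2
          - of_nat k * poly P (of_real x\<^sub>0) * poly (pderiv (pderiv P)) (of_real x\<^sub>0) = of_real L"
proof -
  define c where "c = cos (pi / real (k - 1))"
  define s where "s = sin (pi / real (k - 1))"
  define W where "W = (2 * cos (pi / real (k - 1))) ^ (k - 2)"
  define D where "D = b * (2 * c * W) - (1 - b)"
  have "k \<ge> 3" using k by simp
  note V = poly_reduced_edge_poly_critical[OF this, of b, folded W_def c_def s_def]
  have x\<^sub>0: "x\<^sub>0 = 2 * c" by (simp add: x\<^sub>0_def c_def)
  define \<psi> where "\<psi> = pi / real (k - 1)"
  have "0 < \<psi>" "\<psi> < pi / 2" using k unfolding \<psi>_def by (simp, intro divide_strict_left_mono) auto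
  hence c: "c > 0" and s: "s > 0" unfolding c_def s_def \<psi>_def[symmetric]
    by (auto intro!: cos_gt_zero_pi sin_gt_zero)
  have "b > 0" using b(1) beta_upper_pos_le_one(1)[of k] k by simp
  hence "(2 * c) ^ (k - 1) > (1 - b) / b" using b(1) beta_upper_le_iff(1)[of k b] k by (simp add: c_def)
  moreover have "k - 1 = Suc (k - 2)" using k by simp
  ultimately have "2 * c * W > (1 - b) / b" by (simp add: W_def c_def mult_ac)
  hence D: "D > 0" using \<open>b > 0\<close> by (simp add: D_def field_simps)
  have "(1 - b) * (2 * (- c)) + b * (4 * c\<^sup>2 * W) = 2 * c * D" by (simp add: D_def power2_eq_square algebra_simps)
  thus "poly P (of_real x\<^sub>0) \<noteq> 0" using D c unfolding P_def x\<^sub>0 V(1) by simp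
  have "s\<^sup>2 + c\<^sup>2 = 1" by (simp add: s_def c_def)
  have "(real k - 1) * ((1 - b) * (real k * (- s) / s) + b * (real k * (2 * c * W)))\<^sup>2
       - real k * ((1 - b) * (2 * (- c)) + b * (4 * c\<^sup>2 * W))
            * ((1 - b) * (real k * ((- s) * c - real k * (- c) * s) / (2 * s ^ 3)) + b * (real k * (real k - 1) * W))
       = - (real k ^ 2 * (real k - 1) * D * (1 - b) * (s\<^sup>2 + c\<^sup>2)) / s\<^sup>2"
    using s unfolding D_def by (simp add: field_simps power2_eq_square power3_eq_cube)
  hence ident: "(real k - 1) * ((1 - b) * (real k * (- s) / s) + b * (real k * (2 * c * W)))\<^sup>2
       - real k * ((1 - b) * (2 * (- c)) + b * (4 * c\<^sup>2 * W))
            * ((1 - b) * (real k * ((- s) * c - real k * (- c) * s) / (2 * s ^ 3)) + b * (real k * (real k - 1) * W))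
       = - (real k ^ 2 * (real k - 1) * D * (1 - b)) / s\<^sup>2"
    using \<open>s\<^sup>2 + c\<^sup>2 = 1\<close> by simp
  have "(of_nat k - 1) * (poly (pderiv P) (of_real x\<^sub>0))\<^sup>2
          - of_nat k * poly P (of_real x\<^sub>0) * poly (pderiv (pderiv P)) (of_real x\<^sub>0)
        = of_real (- (real k ^ 2 * (real k - 1) * D * (1 - b)) / s\<^sup>2)"
    unfolding P_def x\<^sub>0 V ident[symmetric] by simp
  moreover have "real k ^ 2 * (real k - 1) * D * (1 - b) / s\<^sup>2 > 0"
    using D b k s by (intro divide_pos_pos mult_pos_pos) auto
  ultimately show "\<exists>L<0. (of_nat k - 1) * (poly (pderiv P) (of_real x\<^sub>0))\<^sup>2
          - of_nat k * poly P (of_real x\<^sub>0) * poly (pderiv (pderiv P)) (of_real x\<^sub>0) = of_real L"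
    by (intro exI[of _ "- (real k ^ 2 * (real k - 1) * D * (1 - b)) / s\<^sup>2"]) auto
qed

lemma reduced_edge_poly_nonreal_root:
  assumes k: "k \<ge> 4" and b: "beta_upper k < b" "b < 1"
  obtains y where "poly (reduced_edge_poly b k) y = 0" "Im y \<noteq> 0"
proof -
  let ?P = "reduced_edge_poly b k"
  define x\<^sub>0 where "x\<^sub>0 = 2 * cos (pi / real (k - 1))"
  obtain root where "smult (lead_coeff ?P) (\<Prod>i<degree ?P. [:- root i, 1:]) = ?P"
    using complex_poly_decompose' by blast
  hence P: "?P = (\<Prod>i<k. [:- root i, 1:])" using degree_reduced_edge_poly[of k b] k by simp
  have roots: "poly ?P (root i) = 0" if "i < k" for i
    unfolding P using that by (auto simp: poly_prod)
  show ?thesis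
  proof (cases "\<exists>i<k. Im (root i) \<noteq> 0")
    case True
    thus ?thesis using roots that by blast
  next
    case False
    define \<rho> where "\<rho> i = Re (root i)" for i
    have "?P = real_root_poly \<rho> k"
      unfolding P real_root_poly_def \<rho>_def using False by (intro prod.cong) (auto simp: complex_eq_iff)
    moreover have "x\<^sub>0 \<noteq> \<rho> i" if "i < k" for i
    proof
      assume "x\<^sub>0 = \<rho> i"
      hence "root i = of_real x\<^sub>0" using False that by (simp add: \<rho>_def complex_eq_iff)
      thus False using laguerre_fails_for_reduced_edge_poly(1)[OF k b] roots[OF that] by (simp add: x\<^sub>0_def)
    qed
    ultimately obtain L where "L \<ge> 0" "(of_nat k - 1) * (poly (pderiv ?P) (of_real x\<^sub>0))\<^sup>2
          - of_nat k * poly ?P (of_real x\<^sub>0) * poly (pderiv (pderiv ?P)) (of_real x\<^sub>0) = of_real L"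
      using laguerre_inequality[of k x\<^sub>0 \<rho>] by auto
    thus ?thesis using laguerre_fails_for_reduced_edge_poly(2)[OF k b, folded x\<^sub>0_def] by auto
  qed
qed

lemma beta_upper_3: "beta_upper 3 = 1"
  by (simp add: beta_upper_def)

lemma single_edge_zero_off_circle_upper:
  assumes k: "k \<ge> 3" and b: "beta_upper k < b" "b < 1"
  shows "\<exists>z. ising_Z {0..<k} {{0..<k}} b z = 0 \<and> cmod z \<noteq> 1"
proof -
  have "k \<noteq> 3" using b beta_upper_3 by auto
  hence "k \<ge> 4" using k by simp
  then obtain y where "poly (reduced_edge_poly b k) y = 0" "Im y \<noteq> 0"
    using reduced_edge_poly_nonreal_root b by blast
  thus ?thesis using single_edge_zero_off_circle_of_nonreal_root ising_Z_single_edge k by fastforce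
qed

lemma single_edge_zero_off_circle_lower:
  assumes k: "k \<ge> 2" and b: "b < beta_lower k"
  shows "\<exists>z. ising_Z {0..<k} {{0..<k}} b z = 0 \<and> cmod z \<noteq> 1"
proof -
  define f where "f x = (1 - b) * (1 + x ^ k) + b * (1 + x) ^ k" for x :: real
  have "b < 0" using b beta_lower_neg[OF k] by simp
  hence "(b - 1) / b < 2 ^ (k - 1)" using b beta_lower_le_iff(1)[OF k \<open>b < 0\<close>] by simp
  moreover have "f 1 = 2 * b * (2 ^ (k - 1) - (b - 1) / b)"
    using k \<open>b < 0\<close> by (simp add: f_def field_simps flip: power_Suc)
  ultimately have "f 1 < 0" using \<open>b < 0\<close> by (simp add: mult_neg_pos)
  moreover have "f 0 = 1" using k by (simp add: f_def power_0_left)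
  moreover have "continuous_on {0..1} f" unfolding f_def by (intro continuous_intros)
  ultimately obtain x where "0 \<le> x" "x \<le> 1" "f x = 0" using IVT2'[of f 1 0 0] by force
  moreover have "x \<noteq> 1" using \<open>f x = 0\<close> \<open>f 1 < 0\<close> by auto
  moreover have "ising_Z {0..<k} {{0..<k}} b (of_real x) = of_real (f x)"
    using ising_Z_single_edge[of k b "of_real x"] k by (simp add: f_def)
  ultimately show ?thesis by (intro exI[of _ "of_real x"]) simp
qed

lemma single_edge_zero_off_circle_above_one:
  assumes b: "b > 1"
  shows "\<exists>z. ising_Z {0..<2::nat} {{0..<2}} b z = 0 \<and> cmod z \<noteq> 1"
proof -
  define f where "f x = (1 - b) * (1 + x\<^sup>2) + b * (1 + x)\<^sup>2" for x :: real
  have "f (-1) < 0" "f 0 = 1" using b by (simp_all add: f_def)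
  moreover have "continuous_on {-1..0} f" unfolding f_def by (intro continuous_intros)
  ultimately obtain x where "-1 \<le> x" "x \<le> 0" "f x = 0" using IVT'[of f "-1" 0 0] by force
  moreover have "x \<noteq> -1" using \<open>f x = 0\<close> \<open>f (-1) < 0\<close> by auto
  moreover have "ising_Z {0..<2::nat} {{0..<2}} b (of_real x) = of_real (f x)"
    using ising_Z_single_edge[of 2 b "of_real x"] by (simp add: f_def)
  ultimately show ?thesis by (intro exI[of _ "of_real x"]) (simp add: abs_if)
qed

theorem ising_Z_zero_off_unit_circle:
  assumes k: "k \<ge> 3" and b: "b \<noteq> 1" "\<not> (beta_lower k \<le> b \<and> b \<le> beta_upper k)"
  shows "\<exists>(V :: nat set) E. hypergraph V E \<and> (\<forall>e\<in>E. card e \<le> k) \<and> (\<exists>z. ising_Z V E b z = 0 \<and> cmod z \<noteq> 1)"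
proof -
  consider "b < beta_lower k" | "beta_upper k < b" "b < 1" | "1 < b" using b by linarith
  hence "\<exists>m\<in>{2..k}. \<exists>z. ising_Z {0..<m} {{0..<m}} b z = 0 \<and> cmod z \<noteq> 1"
  proof cases
    case 1 thus ?thesis using single_edge_zero_off_circle_lower[of k b] k by (intro bexI[of _ k]) auto
  next
    case 2 thus ?thesis using single_edge_zero_off_circle_upper[OF k] k by (intro bexI[of _ k]) auto
  next
    case 3 thus ?thesis using single_edge_zero_off_circle_above_one k by (intro bexI[of _ 2]) auto
  qed
  thus ?thesis using hypergraph_single_edge by fastforce
qed

theorem theorem1p2:
  fixes k :: nat
  assumes "k \<ge> 3"
  shows "(\<forall>(V :: 'a set) E (b::real).
            hypergraph V E \<longrightarrow> (\<forall>e\<in>E. 2 \<le> card e \<and> card e \<le> k) \<longrightarrow>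
            - 1 / (2 ^ (k - 1) - 1) \<le> b \<longrightarrow>
            b \<le> 1 / (2 ^ (k - 1) * cos (pi / real (k - 1)) ^ (k - 1) + 1) \<longrightarrow>
            (\<forall>z::complex. ising_Z V E b z = 0 \<longrightarrow> cmod z = 1))
       \<and> (\<forall>b::real. b \<noteq> 1 \<longrightarrow>
            \<not> (- 1 / (2 ^ (k - 1) - 1) \<le> b \<and>
               b \<le> 1 / (2 ^ (k - 1) * cos (pi / real (k - 1)) ^ (k - 1) + 1)) \<longrightarrow>
            (\<exists>(V :: nat set) E. hypergraph V E \<and> (\<forall>e\<in>E. card e \<le> k) \<and>
               (\<exists>z::complex. ising_Z V E b z = 0 \<and> cmod z \<noteq> 1)))"
proof -
  have bounds: "- 1 / (2 ^ (k - 1) - 1) = beta_lower k"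
    "1 / (2 ^ (k - 1) * cos (pi / real (k - 1)) ^ (k - 1) + 1) = beta_upper k"
    by (simp_all add: beta_lower_def beta_upper_def power_mult_distrib)
  show ?thesis
    unfolding bounds using ising_Z_zeros_on_unit_circle[OF assms] ising_Z_zero_off_unit_circle[OF assms]
    by blast
qed

end
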